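(* Let $G$ be a finite group and $\varphi\colon T\to S$ a morphism of $G$-Tambara functors. The induced map $\varphi^a\colon\operatorname{Spec}_{\mathbf{Nak}}(S)\to\operatorname{Spec}_{\mathbf{Nak}}(T)$ sends each prime $Q$ of $S$ to its levelwise preimage $\varphi^{-1}(Q)$, where $\varphi^{-1}(Q)(G/H)=\varphi_H^{-1}(Q(G/H))$.
   Context: All rings are commutative with unit. A $G$-Tambara functor consists of commutative rings $T(G/H)$ for subgroups $H\le G$ with restriction ring maps, additive transfer maps, multiplicative norm maps and conjugation isomorphisms satisfying the standard Tambara axioms (Hill–Mazur); a morphism $\varphi\colon T\to S$ is a family of ring maps $\varphi_H$ commuting with all structure maps. A Tambara ideal is a family of ring ideals closed under restriction, transfer, norm and conjugation; proper if $1\notin I(G/G)$. Products of Tambara ideals are generated by levelwise products; the radical $\sqrt I$ has $\sqrt I(G/H)=\{x\mid\langle x\rangle^n\subseteq I\text{ for some }n\ge1\}$, $\langle x\rangle$ the Tambara ideal generated by $x$. A proper ideal $P$ is prime if $IJ\subseteq P$ implies $I\subseteq P$ or $J\subseteq P$. $\operatorname{Spec}_{\mathbf{Nak}}(T)$ is the set of primes with subbasic closed sets $V_H(x)=\{P\mid x\in P(G/H)\}$. $\mathrm{RadId}_G(T)$ is the frame of radical Tambara ideals (inclusion order; joins $\sqrt{\sum I_\lambda}$); each prime $P$ corresponds to the frame point $p_P\colon\mathrm{RadId}_G(T)\to\{0,1\}$ with $p_P(I)=0$ iff $I\subseteq P$, and conversely a point $p$ corresponds to the prime $\bigvee\{I\mid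 p(I)=0\}$. For a Tambara ideal $I$ of $T$, $\varphi_*(I)$ is the Tambara ideal of $S$ generated by the sets $\varphi_H(I(G/H))$, and $\widetilde\varphi(I)=\sqrt{\varphi_*(I)}$ defines a frame homomorphism $\mathrm{RadId}_G(T)\to\mathrm{RadId}_G(S)$. The map $\varphi^a$ sends $Q$ to the prime of $T$ corresponding to the point $p_Q\circ\widetilde\varphi$. *)

theory Defs
  imports "HOL-Algebra.Algebra"
begin

(* ------------------------------------------------------------------------
   G-Tambara functors in subgroup ("Hill--Mazur") form.
   G is a HOL-Algebra group; the level T(G/H) is indexed by the subgroup H.
   All levels share the element type 'a (this loses no generality).
     tlev T H        : the commutative ring T(G/H)
     tres T H K      : restriction  T(G/H) -> T(G/K)      (K <= H)
     ttr  T K H      : transfer     T(G/K) -> T(G/H)      (K <= H)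
     tnm  T K H      : norm         T(G/K) -> T(G/H)      (K <= H)
     tcj  T g H      : conjugation  T(G/H) -> T(G/gHg^-1)
   ------------------------------------------------------------------------ *)

record ('g, 'a) tambara =
  tlev :: "'g set \<Rightarrow> 'a ring"
  tres :: "'g set \<Rightarrow> 'g set \<Rightarrow> 'a \<Rightarrow> 'a"
  ttr  :: "'g set \<Rightarrow> 'g set \<Rightarrow> 'a \<Rightarrow> 'a"
  tnm  :: "'g set \<Rightarrow> 'g set \<Rightarrow> 'a \<Rightarrow> 'a"
  tcj  :: "'g \<Rightarrow> 'g set \<Rightarrow> 'a \<Rightarrow> 'a"

definition conjs :: "('g, 'm) monoid_scheme \<Rightarrow> 'g \<Rightarrow> 'g set \<Rightarrow> 'g set" where
  "conjs G g H = (\<lambda>h. g \<otimes>\<^bsub>G\<^esub> h \<otimes>\<^bsub>G\<^esub> inv\<^bsub>G\<^esub> g) ` H"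

definition lcos :: "('g, 'm) monoid_scheme \<Rightarrow> 'g \<Rightarrow> 'g set \<Rightarrow> 'g set" where
  "lcos G h C = (\<lambda>c. h \<otimes>\<^bsub>G\<^esub> c) ` C"

(* H/K as a set of left cosets *)
definition cosetsH :: "('g, 'm) monoid_scheme \<Rightarrow> 'g set \<Rightarrow> 'g set \<Rightarrow> 'g set set" where
  "cosetsH G H K = {lcos G h K | h. h \<in> H}"

(* double coset L h K and the set L\H/K *)
definition dcos :: "('g, 'm) monoid_scheme \<Rightarrow> 'g set \<Rightarrow> 'g \<Rightarrow> 'g set \<Rightarrow> 'g set" where
  "dcos G L h K = {l \<otimes>\<^bsub>G\<^esub> h \<otimes>\<^bsub>G\<^esub> k | l k. l \<in> L \<and> k \<in> K}"

definition dcosets :: "('g, 'm) monoid_scheme \<Rightarrow> 'g set \<Rightarrow> 'g set \<Rightarrow> 'g set \<Rightarrow> 'g set set" where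
  "dcosets G L H K = {dcos G L h K | h. h \<in> H}"

definition rep :: "'x set \<Rightarrow> 'x" where
  "rep D = (SOME x. x \<in> D)"

definition sact :: "('g, 'm) monoid_scheme \<Rightarrow> 'g \<Rightarrow> 'g set set \<Rightarrow> 'g set set" where
  "sact G h A = lcos G h ` A"

(* sections s : H/K -> H/L of the projection H/L -> H/K (L <= K <= H),
   extended by {} outside H/K, and the conjugation action on them *)
definition sections :: "('g, 'm) monoid_scheme \<Rightarrow> 'g set \<Rightarrow> 'g set \<Rightarrow> 'g set \<Rightarrow> ('g set \<Rightarrow> 'g set) set" where
  "sections G H K L = {s. (\<forall>C \<in> cosetsH G H K. s C \<in> cosetsH G H L \<and> s C \<subseteq> C)
                         \<and> (\<forall>C. C \<notin> cosetsH G H K \<longrightarrow> s C = {})}"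

definition secact :: "('g, 'm) monoid_scheme \<Rightarrow> 'g set \<Rightarrow> 'g set \<Rightarrow> 'g \<Rightarrow> ('g set \<Rightarrow> 'g set) \<Rightarrow> ('g set \<Rightarrow> 'g set)" where
  "secact G H K h s = (\<lambda>C. if C \<in> cosetsH G H K
                           then lcos G h (s (lcos G (inv\<^bsub>G\<^esub> h) C)) else {})"

definition mackey_tr_rhs :: "('g, 'm) monoid_scheme \<Rightarrow> ('g, 'a) tambara \<Rightarrow> 'g set \<Rightarrow> 'g set \<Rightarrow> 'g set \<Rightarrow> 'a \<Rightarrow> 'a" where
  "mackey_tr_rhs G T H L K a =
     finsum (tlev T L)
       (\<lambda>D. let g = rep D in
          ttr T (L \<inter> conjs G g K) L
            (tres T (conjs G g K) (L \<inter> conjs G g K) (tcj T g K a)))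
       (dcosets G L H K)"

definition mackey_nm_rhs :: "('g, 'm) monoid_scheme \<Rightarrow> ('g, 'a) tambara \<Rightarrow> 'g set \<Rightarrow> 'g set \<Rightarrow> 'g set \<Rightarrow> 'a \<Rightarrow> 'a" where
  "mackey_nm_rhs G T H L K a =
     finprod (tlev T L)
       (\<lambda>D. let g = rep D in
          tnm T (L \<inter> conjs G g K) L
            (tres T (conjs G g K) (L \<inter> conjs G g K) (tcj T g K a)))
       (dcosets G L H K)"

(* Tambara reciprocity for the norm of a sum (exponential diagram for the
   fold map H/K + H/K -> H/K):
   N_K^H(a+b) = sum over H-orbits [A] of subsets A of H/K of
     tr^H_{H_A} prod_{h in H_A\H/K} N^{H_A}_{H_A cap hKh^-1}
        res^{hKh^-1}_{H_A cap hKh^-1} c_h (if hK in A then b else a)   *)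
definition nm_sum_rhs :: "('g, 'm) monoid_scheme \<Rightarrow> ('g, 'a) tambara \<Rightarrow> 'g set \<Rightarrow> 'g set \<Rightarrow> 'a \<Rightarrow> 'a \<Rightarrow> 'a" where
  "nm_sum_rhs G T H K a b =
     finsum (tlev T H)
       (\<lambda>Orb. let A = rep Orb; HA = {h \<in> H. sact G h A = A} in
          ttr T HA H
            (finprod (tlev T HA)
               (\<lambda>D. let h = rep D in
                  tnm T (HA \<inter> conjs G h K) HA
                    (tres T (conjs G h K) (HA \<inter> conjs G h K)
                       (tcj T h K (if lcos G h K \<in> A then b else a))))
               (dcosets G HA H K)))
       {{sact G h A | h. h \<in> H} | A. A \<subseteq> cosetsH G H K}"

(* Tambara reciprocity for the norm of a transfer (exponential diagram for
   H/L -> H/K -> H/H):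
   N_K^H tr_L^K(a) = sum over H-orbits [s] of sections s of H/L -> H/K of
     tr^H_{H_s} prod_{h in H_s\H/K} N^{H_s}_{H_s cap hKh^-1}
        res^{h'Lh'^-1}_{H_s cap hKh^-1} c_{h'} a,   where s(hK) = h'L   *)
definition nm_tr_rhs :: "('g, 'm) monoid_scheme \<Rightarrow> ('g, 'a) tambara \<Rightarrow> 'g set \<Rightarrow> 'g set \<Rightarrow> 'g set \<Rightarrow> 'a \<Rightarrow> 'a" where
  "nm_tr_rhs G T H K L a =
     finsum (tlev T H)
       (\<lambda>Orb. let s = rep Orb; Hs = {h \<in> H. secact G H K h s = s} in
          ttr T Hs H
            (finprod (tlev T Hs)
               (\<lambda>D. let h = rep D; h' = rep (s (lcos G h K)) in
                  tnm T (Hs \<inter> conjs G h K) Hs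
                    (tres T (conjs G h' L) (Hs \<inter> conjs G h K) (tcj T h' L a)))
               (dcosets G Hs H K)))
       {{secact G H K h s | h. h \<in> H} | s. s \<in> sections G H K L}"

definition tambara :: "('g, 'm) monoid_scheme \<Rightarrow> ('g, 'a) tambara \<Rightarrow> bool" where
  "tambara G T \<longleftrightarrow>
    (\<forall>H. subgroup H G \<longrightarrow> cring (tlev T H)) \<and>
    (\<forall>H K. subgroup H G \<longrightarrow> subgroup K G \<longrightarrow> K \<subseteq> H \<longrightarrow>
        tres T H K \<in> ring_hom (tlev T H) (tlev T K) \<and>
        ttr T K H \<in> hom (add_monoid (tlev T K)) (add_monoid (tlev T H)) \<and>
        tnm T K H \<in> hom (tlev T K) (tlev T H) \<and>
        tnm T K H \<one>\<^bsub>tlev T K\<^esub> = \<one>\<^bsub>tlev T H\<^esub> \<and>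
        tnm T K H \<zero>\<^bsub>tlev T K\<^esub> = \<zero>\<^bsub>tlev T H\<^esub>) \<and>
    (\<forall>g \<in> carrier G. \<forall>H. subgroup H G \<longrightarrow>
        tcj T g H \<in> ring_hom (tlev T H) (tlev T (conjs G g H))) \<and>
    \<comment> \<open>identities and functoriality\<close>
    (\<forall>H. subgroup H G \<longrightarrow> (\<forall>x \<in> carrier (tlev T H).
        tres T H H x = x \<and> ttr T H H x = x \<and> tnm T H H x = x \<and>
        (\<forall>h \<in> H. tcj T h H x = x))) \<and>
    (\<forall>H K L. subgroup H G \<longrightarrow> subgroup K G \<longrightarrow> subgroup L G \<longrightarrow> L \<subseteq> K \<longrightarrow> K \<subseteq> H \<longrightarrow>
        (\<forall>x \<in> carrier (tlev T H). tres T K L (tres T H K x) = tres T H L x) \<and>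
        (\<forall>x \<in> carrier (tlev T L). ttr T K H (ttr T L K x) = ttr T L H x \<and>
                                     tnm T K H (tnm T L K x) = tnm T L H x)) \<and>
    (\<forall>H. subgroup H G \<longrightarrow> (\<forall>g \<in> carrier G. \<forall>g' \<in> carrier G. \<forall>x \<in> carrier (tlev T H).
        tcj T g (conjs G g' H) (tcj T g' H x) = tcj T (g \<otimes>\<^bsub>G\<^esub> g') H x)) \<and>
    \<comment> \<open>compatibility of conjugation with restriction, transfer, norm\<close>
    (\<forall>H K. subgroup H G \<longrightarrow> subgroup K G \<longrightarrow> K \<subseteq> H \<longrightarrow> (\<forall>g \<in> carrier G.
        (\<forall>x \<in> carrier (tlev T H).
           tcj T g K (tres T H K x) = tres T (conjs G g H) (conjs G g K) (tcj T g H x)) \<and>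
        (\<forall>x \<in> carrier (tlev T K).
           tcj T g H (ttr T K H x) = ttr T (conjs G g K) (conjs G g H) (tcj T g K x) \<and>
           tcj T g H (tnm T K H x) = tnm T (conjs G g K) (conjs G g H) (tcj T g K x)))) \<and>
    \<comment> \<open>Frobenius reciprocity\<close>
    (\<forall>H K. subgroup H G \<longrightarrow> subgroup K G \<longrightarrow> K \<subseteq> H \<longrightarrow>
        (\<forall>a \<in> carrier (tlev T K). \<forall>b \<in> carrier (tlev T H).
           ttr T K H (a \<otimes>\<^bsub>tlev T K\<^esub> tres T H K b) = ttr T K H a \<otimes>\<^bsub>tlev T H\<^esub> b)) \<and>
    \<comment> \<open>additive and multiplicative double coset formulas\<close>
    (\<forall>H K L. subgroup H G \<longrightarrow> subgroup K G \<longrightarrow> subgroup L G \<longrightarrow> K \<subseteq> H \<longrightarrow> L \<subseteq> H \<longrightarrow>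
        (\<forall>a \<in> carrier (tlev T K).
           tres T H L (ttr T K H a) = mackey_tr_rhs G T H L K a \<and>
           tres T H L (tnm T K H a) = mackey_nm_rhs G T H L K a)) \<and>
    \<comment> \<open>Tambara reciprocity: norms of sums and of transfers\<close>
    (\<forall>H K. subgroup H G \<longrightarrow> subgroup K G \<longrightarrow> K \<subseteq> H \<longrightarrow>
        (\<forall>a \<in> carrier (tlev T K). \<forall>b \<in> carrier (tlev T K).
           tnm T K H (a \<oplus>\<^bsub>tlev T K\<^esub> b) = nm_sum_rhs G T H K a b)) \<and>
    (\<forall>H K L. subgroup H G \<longrightarrow> subgroup K G \<longrightarrow> subgroup L G \<longrightarrow> L \<subseteq> K \<longrightarrow> K \<subseteq> H \<longrightarrow>
        (\<forall>a \<in> carrier (tlev T L).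
           tnm T K H (ttr T L K a) = nm_tr_rhs G T H K L a))"

definition tmor :: "('g, 'm) monoid_scheme \<Rightarrow> ('g, 'a) tambara \<Rightarrow> ('g, 'b) tambara \<Rightarrow> ('g set \<Rightarrow> 'a \<Rightarrow> 'b) \<Rightarrow> bool" where
  "tmor G T S \<phi> \<longleftrightarrow>
    (\<forall>H. subgroup H G \<longrightarrow> \<phi> H \<in> ring_hom (tlev T H) (tlev S H)) \<and>
    (\<forall>H K. subgroup H G \<longrightarrow> subgroup K G \<longrightarrow> K \<subseteq> H \<longrightarrow>
        (\<forall>x \<in> carrier (tlev T H). \<phi> K (tres T H K x) = tres S H K (\<phi> H x)) \<and>
        (\<forall>x \<in> carrier (tlev T K). \<phi> H (ttr T K H x) = ttr S K H (\<phi> K x) \<and>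
                                     \<phi> H (tnm T K H x) = tnm S K H (\<phi> K x))) \<and>
    (\<forall>H. subgroup H G \<longrightarrow> (\<forall>g \<in> carrier G. \<forall>x \<in> carrier (tlev T H).
        \<phi> (conjs G g H) (tcj T g H x) = tcj S g H (\<phi> H x)))"

definition tideal :: "('g, 'm) monoid_scheme \<Rightarrow> ('g, 'a) tambara \<Rightarrow> ('g set \<Rightarrow> 'a set) \<Rightarrow> bool" where
  "tideal G T I \<longleftrightarrow>
    (\<forall>H. \<not> subgroup H G \<longrightarrow> I H = {}) \<and>
    (\<forall>H. subgroup H G \<longrightarrow> ideal (I H) (tlev T H)) \<and>
    (\<forall>H K. subgroup H G \<longrightarrow> subgroup K G \<longrightarrow> K \<subseteq> H \<longrightarrow>
        tres T H K ` I H \<subseteq> I K \<and> ttr T K H ` I K \<subseteq> I H \<and> tnm T K H ` I K \<subseteq> I H) \<and>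
    (\<forall>H. subgroup H G \<longrightarrow> (\<forall>g \<in> carrier G. tcj T g H ` I H \<subseteq> I (conjs G g H)))"

definition tgen :: "('g, 'm) monoid_scheme \<Rightarrow> ('g, 'a) tambara \<Rightarrow> ('g set \<Rightarrow> 'a set) \<Rightarrow> ('g set \<Rightarrow> 'a set)" where
  "tgen G T Xs = (\<lambda>H. if subgroup H G then
       (\<Inter>J \<in> {J. tideal G T J \<and> (\<forall>H'. subgroup H' G \<longrightarrow> Xs H' \<subseteq> J H')}. J H) else {})"

definition tgen1 :: "('g, 'm) monoid_scheme \<Rightarrow> ('g, 'a) tambara \<Rightarrow> 'g set \<Rightarrow> 'a \<Rightarrow> ('g set \<Rightarrow> 'a set)" where
  "tgen1 G T H x = tgen G T (\<lambda>H'. if H' = H then {x} else {})"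

definition tunit :: "('g, 'm) monoid_scheme \<Rightarrow> ('g, 'a) tambara \<Rightarrow> ('g set \<Rightarrow> 'a set)" where
  "tunit G T = (\<lambda>H. if subgroup H G then carrier (tlev T H) else {})"

definition tprod :: "('g, 'm) monoid_scheme \<Rightarrow> ('g, 'a) tambara \<Rightarrow> ('g set \<Rightarrow> 'a set) \<Rightarrow> ('g set \<Rightarrow> 'a set) \<Rightarrow> ('g set \<Rightarrow> 'a set)" where
  "tprod G T I J = tgen G T (\<lambda>H. {x \<otimes>\<^bsub>tlev T H\<^esub> y | x y. x \<in> I H \<and> y \<in> J H})"

primrec tpow :: "('g, 'm) monoid_scheme \<Rightarrow> ('g, 'a) tambara \<Rightarrow> ('g set \<Rightarrow> 'a set) \<Rightarrow> nat \<Rightarrow> ('g set \<Rightarrow> 'a set)" where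
  "tpow G T I 0 = tunit G T"
| "tpow G T I (Suc n) = tprod G T (tpow G T I n) I"

definition trad :: "('g, 'm) monoid_scheme \<Rightarrow> ('g, 'a) tambara \<Rightarrow> ('g set \<Rightarrow> 'a set) \<Rightarrow> ('g set \<Rightarrow> 'a set)" where
  "trad G T I = (\<lambda>H. if subgroup H G then
       {x \<in> carrier (tlev T H). \<exists>n\<ge>1. tpow G T (tgen1 G T H x) n \<le> I} else {})"

definition tprime :: "('g, 'm) monoid_scheme \<Rightarrow> ('g, 'a) tambara \<Rightarrow> ('g set \<Rightarrow> 'a set) \<Rightarrow> bool" where
  "tprime G T P \<longleftrightarrow> tideal G T P \<and> \<one>\<^bsub>tlev T (carrier G)\<^esub> \<notin> P (carrier G) \<and>
     (\<forall>I J. tideal G T I \<longrightarrow> tideal G T J \<longrightarrow> tprod G T I J \<le> P \<longrightarrow> I \<le> P \<or> J \<le> P)"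

definition radid :: "('g, 'm) monoid_scheme \<Rightarrow> ('g, 'a) tambara \<Rightarrow> ('g set \<Rightarrow> 'a set) set" where
  "radid G T = {I. tideal G T I \<and> trad G T I = I}"

definition tjoin :: "('g, 'm) monoid_scheme \<Rightarrow> ('g, 'a) tambara \<Rightarrow> ('g set \<Rightarrow> 'a set) set \<Rightarrow> ('g set \<Rightarrow> 'a set)" where
  "tjoin G T \<I> = trad G T (tgen G T (\<lambda>H. \<Union>I\<in>\<I>. I H))"

definition tpush :: "('g, 'm) monoid_scheme \<Rightarrow> ('g, 'b) tambara \<Rightarrow> ('g set \<Rightarrow> 'a \<Rightarrow> 'b) \<Rightarrow> ('g set \<Rightarrow> 'a set) \<Rightarrow> ('g set \<Rightarrow> 'b set)" where
  "tpush G S \<phi> I = tgen G S (\<lambda>H. \<phi> H ` I H)"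

definition ttilde :: "('g, 'm) monoid_scheme \<Rightarrow> ('g, 'b) tambara \<Rightarrow> ('g set \<Rightarrow> 'a \<Rightarrow> 'b) \<Rightarrow> ('g set \<Rightarrow> 'a set) \<Rightarrow> ('g set \<Rightarrow> 'b set)" where
  "ttilde G S \<phi> I = trad G S (tpush G S \<phi> I)"

definition fpoint :: "('g set \<Rightarrow> 'a set) \<Rightarrow> ('g set \<Rightarrow> 'a set) \<Rightarrow> nat" where
  "fpoint P I = (if I \<le> P then 0 else 1)"

definition prime_of_point :: "('g, 'm) monoid_scheme \<Rightarrow> ('g, 'a) tambara \<Rightarrow> (('g set \<Rightarrow> 'a set) \<Rightarrow> nat) \<Rightarrow> ('g set \<Rightarrow> 'a set)" where
  "prime_of_point G T p = tjoin G T {I \<in> radid G T. p I = 0}"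

(* phi^a(Q) : prime of T corresponding to p_Q o phi~ *)
definition spec_map :: "('g, 'm) monoid_scheme \<Rightarrow> ('g, 'a) tambara \<Rightarrow> ('g, 'b) tambara \<Rightarrow> ('g set \<Rightarrow> 'a \<Rightarrow> 'b) \<Rightarrow> ('g set \<Rightarrow> 'b set) \<Rightarrow> ('g set \<Rightarrow> 'a set)" where
  "spec_map G T S \<phi> Q = prime_of_point G T (\<lambda>I. fpoint Q (ttilde G S \<phi> I))"

end

theory Submission
  imports Defs
begin

text \<open>
  By definition \<open>\<phi>\<^sup>a(Q)\<close> is the join of the radical Tambara ideals \<open>I\<close> of \<open>T\<close> with
  \<open>\<surd>(\<phi>\<^sub>* I) \<subseteq> Q\<close>. Since \<open>Q\<close> is prime, hence radical, this condition says \<open>\<phi>\<^sub>* I \<subseteq> Q\<close>, that is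
  \<open>I \<subseteq> \<phi>\<^sup>-\<^sup>1(Q)\<close>; so the join is \<open>\<phi>\<^sup>-\<^sup>1(Q)\<close> as soon as \<open>\<phi>\<^sup>-\<^sup>1(Q)\<close> is radical. Radicality follows
  from \<open>\<phi>\<^sub>*(I) \<phi>\<^sub>*(J) \<subseteq> \<phi>\<^sub>*(I J)\<close>, which needs an explicit description of \<open>\<phi>\<^sub>* I\<close>.

  The family \<open>\<phi>(I)\<close> is closed under restriction, conjugation and norm. For any such family \<open>X\<close>
  the Tambara ideal generated by \<open>X\<close> is the set of finite sums of transfers \<open>tr\<^sub>K\<^sup>H(s x)\<close> with
  \<open>x \<in> X(K)\<close>: these sums are closed under transfer and conjugation, under restriction by the
  double coset formula, and under norms by the reciprocity formulas for norms of sums and of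
  transfers, by induction on the order of the subgroup. Frobenius reciprocity then yields the
  product inclusion.
\<close>

lemma (in ring) finsum_mem_ideal:
  assumes I: "ideal I R" and f: "f \<in> A \<rightarrow> I"
  shows "finsum R f A \<in> I"
proof (cases "finite A")
  case False
  then show ?thesis using additive_subgroup.zero_closed[OF ideal.axioms(1)[OF I]] by simp
next
  case True
  have IC: "I \<subseteq> carrier R" using ideal.axioms(1)[OF I] additive_subgroup.a_subset by blast
  from True f show ?thesis
  proof (induction A rule: finite_induct)
    case empty
    then show ?case using additive_subgroup.zero_closed[OF ideal.axioms(1)[OF I]] by simp
  next
    case (insert x F)
    then have "finsum R f (insert x F) = f x \<oplus> finsum R f F"
      using IC by (intro finsum_insert) auto
    then show ?case
      using insert additive_subgroup.a_closed[OF ideal.axioms(1)[OF I]] by simp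
  qed
qed

lemma (in cring) finprod_mem_ideal:
  assumes I: "ideal I R" and A: "finite A" "A \<noteq> {}" and f: "f \<in> A \<rightarrow> I"
  shows "finprod R f A \<in> I"
  using A f
proof (induction A rule: finite_ne_induct)
  case (singleton x)
  then show ?case using ideal.Icarr[OF I] by simp
next
  case (insert x F)
  then have "finprod R f (insert x F) = f x \<otimes> finprod R f F"
    using ideal.Icarr[OF I] by (intro finprod_insert) auto
  then show ?case using insert ideal.I_r_closed[OF I] ideal.Icarr[OF I] by simp
qed

section \<open>Cosets, double cosets and stabilisers\<close>

lemma rep_mem: "D \<noteq> {} \<Longrightarrow> rep D \<in> D"
  unfolding rep_def by (rule someI_ex) blast

lemma lcos_eq_l_coset [simp]: "lcos G a C = a <#\<^bsub>G\<^esub> C"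
  unfolding lcos_def l_coset_def by blast

context group
begin

lemma conjs_subgroup:
  assumes "g \<in> carrier G" and "subgroup H G"
  shows "subgroup (conjs G g H) G"
proof -
  have "conjs G g H = g <# H #> inv g"
    unfolding conjs_def l_coset_def r_coset_def by auto
  then show ?thesis using subgroup_conjugation_is_surj2[OF assms] by simp
qed

lemma conjs_mono: "K \<subseteq> H \<Longrightarrow> conjs G g K \<subseteq> conjs G g H"
  unfolding conjs_def by (rule image_mono)

lemma conjs_subset_subgroup:
  assumes "subgroup M G" and "h \<in> M" and "K \<subseteq> M"
  shows "conjs G h K \<subseteq> M"
proof
  fix x assume "x \<in> conjs G h K"
  then obtain k where "k \<in> K" and x: "x = h \<otimes> k \<otimes> inv h" unfolding conjs_def by blast
  then have "k \<in> M" using assms(3) by blast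
  then show "x \<in> M" unfolding x
    using assms(1,2) by (intro subgroup.m_closed subgroup.m_inv_closed)
qed

lemma l_coset_fixed_iff_conjs:
  assumes K: "subgroup K G" and z: "z \<in> carrier G" and x: "x \<in> carrier G"
  shows "x <# (z <# K) = z <# K \<longleftrightarrow> x \<in> conjs G z K"
proof -
  have "x <# (z <# K) = (x \<otimes> z) <# K" using x z subgroup.subset[OF K] by (simp add: lcos_m_assoc)
  moreover have "(x \<otimes> z) <# K = z <# K \<longleftrightarrow> x \<in> conjs G z K"
  proof
    assume fixed: "(x \<otimes> z) <# K = z <# K"
    have "x \<otimes> z \<in> (x \<otimes> z) <# K" using lcos_self[OF _ K] x z by simp
    then have "x \<otimes> z \<in> z <# K" unfolding fixed .
    then obtain k where k: "k \<in> K" "x \<otimes> z = z \<otimes> k" unfolding l_coset_def by blast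
    then have "x = z \<otimes> k \<otimes> inv z"
      using x z subgroup.mem_carrier[OF K] by (simp add: inv_solve_right)
    with k(1) show "x \<in> conjs G z K" unfolding conjs_def by blast
  next
    assume "x \<in> conjs G z K"
    then obtain k where k: "k \<in> K" "x = z \<otimes> k \<otimes> inv z" unfolding conjs_def by blast
    then have xz: "x \<otimes> z = z \<otimes> k" using z subgroup.mem_carrier[OF K] by (simp add: m_assoc)
    have "z \<otimes> k \<in> z <# K" using k(1) unfolding l_coset_def by blast
    then have "z <# K = (z \<otimes> k) <# K" by (rule l_repr_independence[OF _ z K])
    then show "(x \<otimes> z) <# K = z <# K" using xz by simp
  qed
  ultimately show ?thesis by simp
qed

lemma stabilizer_subgroup:
  assumes M: "subgroup M G" and one: "act \<one> x = x"
    and comp: "\<And>a b. a \<in> M \<Longrightarrow> b \<in> M \<Longrightarrow> act a (act b x) = act (a \<otimes> b) x"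
  shows "subgroup {h \<in> M. act h x = x} G"
proof (rule subgroupI)
  show "{h \<in> M. act h x = x} \<subseteq> carrier G" using subgroup.subset[OF M] by blast
  show "{h \<in> M. act h x = x} \<noteq> {}" using subgroup.one_closed[OF M] one by blast
next
  fix a assume "a \<in> {h \<in> M. act h x = x}"
  then have a: "a \<in> M" "act a x = x" by simp_all
  have "act (inv a) x = act (inv a) (act a x)" using a(2) by simp
  also have "\<dots> = x"
    using comp[OF subgroup.m_inv_closed[OF M a(1)] a(1)] one a(1) subgroup.mem_carrier[OF M]
    by simp
  finally show "inv a \<in> {h \<in> M. act h x = x}" using subgroup.m_inv_closed[OF M a(1)] by simp
next
  fix a b assume "a \<in> {h \<in> M. act h x = x}" "b \<in> {h \<in> M. act h x = x}"
  then have a: "a \<in> M" "act a x = x" and b: "b \<in> M" "act b x = x" by simp_all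
  have "act (a \<otimes> b) x = act a (act b x)" by (rule comp[OF a(1) b(1), symmetric])
  also have "\<dots> = x" using a(2) b(2) by simp
  finally show "a \<otimes> b \<in> {h \<in> M. act h x = x}" using subgroup.m_closed[OF M a(1) b(1)] by simp
qed

lemma rep_dcosets_mem:
  assumes "subgroup L G" "subgroup M G" "subgroup K G" "L \<subseteq> M" "K \<subseteq> M"
    and "D \<in> dcosets G L M K"
  shows "rep D \<in> M"
proof -
  obtain h where h: "h \<in> M" "D = dcos G L h K" using assms(6) unfolding dcosets_def by blast
  have "\<one> \<otimes> h \<otimes> \<one> \<in> D"
    unfolding h(2) dcos_def using subgroup.one_closed[OF assms(1)] subgroup.one_closed[OF assms(3)]
    by blast
  then have "rep D \<in> D" by (intro rep_mem) blast
  then obtain l k where lk: "rep D = l \<otimes> h \<otimes> k" "l \<in> L" "k \<in> K"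
    unfolding h(2) dcos_def by blast
  then have "l \<in> M" "k \<in> M" using assms(4,5) by blast+
  then show ?thesis unfolding lk(1) using h(1) by (intro subgroup.m_closed[OF assms(2)])
qed

lemma finite_dcosets:
  assumes "finite (carrier G)" and "subgroup M G"
  shows "finite (dcosets G L M K)"
proof -
  have "dcosets G L M K = (\<lambda>h. dcos G L h K) ` M" unfolding dcosets_def by blast
  moreover have "finite M" by (rule finite_subset[OF subgroup.subset[OF assms(2)] assms(1)])
  ultimately show ?thesis by simp
qed

lemma dcosets_nonempty: "subgroup M G \<Longrightarrow> dcosets G L M K \<noteq> {}"
  unfolding dcosets_def using subgroup.one_closed by blast

lemma cosetsH_subset_carrier:
  assumes "subgroup M G" "subgroup K G" "C \<in> cosetsH G M K"
  shows "C \<subseteq> carrier G"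
proof -
  obtain h where "h \<in> M" "C = h <# K" using assms(3) unfolding cosetsH_def by auto
  then show ?thesis
    using l_coset_subset_G[OF subgroup.subset[OF assms(2)]] subgroup.mem_carrier[OF assms(1)] by simp
qed

lemma l_coset_cosetsH:
  assumes "subgroup M G" "subgroup K G" "h \<in> M" "C \<in> cosetsH G M K"
  shows "h <# C \<in> cosetsH G M K"
proof -
  obtain c where c: "c \<in> M" "C = c <# K" using assms(4) unfolding cosetsH_def by auto
  then have "h <# C = (h \<otimes> c) <# K"
    using assms(1-3) by (simp add: lcos_m_assoc subgroup.subset subgroup.mem_carrier)
  then show ?thesis unfolding cosetsH_def using c(1) assms(1,3) subgroup.m_closed by fastforce
qed

lemma stabilizer_sact_subgroup:
  assumes M: "subgroup M G" and K: "subgroup K G" and B: "B \<subseteq> cosetsH G M K"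
  shows "subgroup {h \<in> M. sact G h B = B} G"
proof (rule stabilizer_subgroup[OF M])
  have C: "\<And>C. C \<in> B \<Longrightarrow> C \<subseteq> carrier G" using B cosetsH_subset_carrier[OF M K] by blast
  show "sact G \<one> B = B" unfolding sact_def using C by (simp add: lcos_mult_one)
  fix a b assume "a \<in> M" "b \<in> M"
  then show "sact G a (sact G b B) = sact G (a \<otimes> b) B"
    unfolding sact_def image_image using C M
    by (simp add: lcos_m_assoc subgroup.mem_carrier)
qed

lemma rep_sact_orbit_subset:
  assumes M: "subgroup M G" and K: "subgroup K G" and B0: "B0 \<subseteq> cosetsH G M K"
    and Orb: "Orb = {sact G h B0 | h. h \<in> M}"
  shows "rep Orb \<subseteq> cosetsH G M K"
proof -
  have "sact G \<one> B0 \<in> Orb" unfolding Orb using subgroup.one_closed[OF M] by blast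
  then have "rep Orb \<in> Orb" by (intro rep_mem) blast
  then obtain h where "h \<in> M" "rep Orb = sact G h B0" unfolding Orb by blast
  then show ?thesis unfolding sact_def using B0 l_coset_cosetsH[OF M K] by auto
qed

definition coset_map :: "'a set \<Rightarrow> 'a set \<Rightarrow> 'a set \<Rightarrow> ('a set \<Rightarrow> 'a set) \<Rightarrow> bool" where
  "coset_map M K K' \<sigma> \<longleftrightarrow>
     \<sigma> ` cosetsH G M K \<subseteq> cosetsH G M K' \<and> (\<forall>C. C \<notin> cosetsH G M K \<longrightarrow> \<sigma> C = {})"

lemma coset_map_subset_carrier:
  assumes "subgroup M G" "subgroup K' G" "coset_map M K K' \<sigma>"
  shows "\<sigma> C \<subseteq> carrier G"
  using assms cosetsH_subset_carrier[OF assms(1,2)] unfolding coset_map_def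
  by (cases "C \<in> cosetsH G M K") auto

lemma secact_coset_map:
  assumes M: "subgroup M G" and K: "subgroup K G" and K': "subgroup K' G"
    and h: "h \<in> M" and \<sigma>: "coset_map M K K' \<sigma>"
  shows "coset_map M K K' (secact G M K h \<sigma>)"
proof -
  have "secact G M K h \<sigma> C \<in> cosetsH G M K'" if C: "C \<in> cosetsH G M K" for C
  proof -
    have "inv h <# C \<in> cosetsH G M K"
      by (rule l_coset_cosetsH[OF M K subgroup.m_inv_closed[OF M h] C])
    then have "\<sigma> (inv h <# C) \<in> cosetsH G M K'" using \<sigma> unfolding coset_map_def by blast
    then show ?thesis unfolding secact_def using C l_coset_cosetsH[OF M K' h] by simp
  qed
  then show ?thesis unfolding coset_map_def secact_def by auto
qed

lemma stabilizer_secact_subgroup: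
  assumes M: "subgroup M G" and K: "subgroup K G" and K': "subgroup K' G"
    and \<sigma>: "coset_map M K K' \<sigma>"
  shows "subgroup {h \<in> M. secact G M K h \<sigma> = \<sigma>} G"
proof (rule stabilizer_subgroup[OF M])
  have MC: "\<And>h. h \<in> M \<Longrightarrow> h \<in> carrier G" using subgroup.mem_carrier[OF M] .
  have C: "\<And>C. C \<in> cosetsH G M K \<Longrightarrow> C \<subseteq> carrier G" by (rule cosetsH_subset_carrier[OF M K])
  note \<sigma>C = coset_map_subset_carrier[OF M K' \<sigma>]
  show "secact G M K \<one> \<sigma> = \<sigma>"
  proof
    fix C show "secact G M K \<one> \<sigma> C = \<sigma> C"
      using \<sigma> C \<sigma>C by (cases "C \<in> cosetsH G M K") (auto simp: secact_def coset_map_def lcos_mult_one)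
  qed
  fix a b assume a: "a \<in> M" and b: "b \<in> M"
  show "secact G M K a (secact G M K b \<sigma>) = secact G M K (a \<otimes> b) \<sigma>"
  proof
    fix C
    show "secact G M K a (secact G M K b \<sigma>) C = secact G M K (a \<otimes> b) \<sigma> C"
    proof (cases "C \<in> cosetsH G M K")
      case True
      have "inv a <# C \<in> cosetsH G M K"
        by (rule l_coset_cosetsH[OF M K subgroup.m_inv_closed[OF M a] True])
      moreover have "inv b <# (inv a <# C) = inv (a \<otimes> b) <# C"
        using a b C[OF True] MC by (simp add: lcos_m_assoc inv_mult_group)
      ultimately show ?thesis
        unfolding secact_def using True a b MC \<sigma>C by (simp add: lcos_m_assoc)
    qed (simp add: secact_def)
  qed
qed

lemma rep_secact_orbit_coset_map:
  assumes M: "subgroup M G" and K: "subgroup K G" and K': "subgroup K' G"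
    and s: "s \<in> sections G M K K'" and Orb: "Orb = {secact G M K h s | h. h \<in> M}"
  shows "coset_map M K K' (rep Orb)"
proof -
  have "secact G M K \<one> s \<in> Orb" unfolding Orb using subgroup.one_closed[OF M] by blast
  then have "rep Orb \<in> Orb" by (intro rep_mem) blast
  then obtain h where h: "h \<in> M" "rep Orb = secact G M K h s" unfolding Orb by blast
  have "coset_map M K K' s" using s unfolding sections_def coset_map_def by auto
  then show ?thesis unfolding h(2) by (rule secact_coset_map[OF M K K' h(1)])
qed

text \<open>
  In \<open>nm_tr_rhs\<close> the factor indexed by \<open>h\<close> restricts from \<open>h' K' h'\<^sup>-\<^sup>1\<close> to \<open>H\<^sub>s \<inter> h K h\<^sup>-\<^sup>1\<close>,
  where \<open>H\<^sub>s\<close> is the stabiliser of \<open>\<sigma>\<close> and \<open>h' K' = \<sigma> (h K)\<close>; the second group lies in the first.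
\<close>

lemma stabilizer_secact_conjs:
  fixes \<sigma> :: "'a set \<Rightarrow> 'a set"
  assumes M: "subgroup M G" and K: "subgroup K G" and K': "subgroup K' G"
    and \<sigma>: "coset_map M K K' \<sigma>" and h: "h \<in> M"
  shows "rep (\<sigma> (h <# K)) \<in> carrier G"
    and "{x \<in> M. secact G M K x \<sigma> = \<sigma>} \<inter> conjs G h K \<subseteq> conjs G (rep (\<sigma> (h <# K))) K'"
proof -
  define h' where "h' = rep (\<sigma> (h <# K))"
  have hK: "h <# K \<in> cosetsH G M K" unfolding cosetsH_def using h by auto
  then have "\<sigma> (h <# K) \<in> cosetsH G M K'" using \<sigma> unfolding coset_map_def by blast
  then obtain z where z: "z \<in> M" "\<sigma> (h <# K) = z <# K'" unfolding cosetsH_def by auto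
  have zc: "z \<in> carrier G" using z(1) subgroup.mem_carrier[OF M] by blast
  have "\<sigma> (h <# K) \<noteq> {}" unfolding z(2) using lcos_self[OF zc K'] by blast
  then have h'z: "h' \<in> z <# K'" unfolding h'_def z(2)[symmetric] by (rule rep_mem)
  then show h'c: "rep (\<sigma> (h <# K)) \<in> carrier G" unfolding h'_def using l_coset_carrier[OF _ zc K'] by blast
  have \<sigma>h: "\<sigma> (h <# K) = h' <# K'"
    unfolding z(2) by (rule l_repr_independence[OF h'z zc K'])
  show "{x \<in> M. secact G M K x \<sigma> = \<sigma>} \<inter> conjs G h K \<subseteq> conjs G (rep (\<sigma> (h <# K))) K'"
    unfolding h'_def[symmetric]
  proof
    fix x assume "x \<in> {x \<in> M. secact G M K x \<sigma> = \<sigma>} \<inter> conjs G h K"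
    then have x: "x \<in> M" "secact G M K x \<sigma> = \<sigma>" "x \<in> conjs G h K" by auto
    have hc: "h \<in> carrier G" and xc: "x \<in> carrier G" using h x(1) subgroup.mem_carrier[OF M] by auto
    have "inv x \<in> conjs G h K" using subgroup.m_inv_closed[OF conjs_subgroup[OF hc K] x(3)] .
    then have fixed: "inv x <# (h <# K) = h <# K"
      using l_coset_fixed_iff_conjs[OF K hc inv_closed[OF xc]] by simp
    have "h' <# K' = secact G M K x \<sigma> (h <# K)" using x(2) \<sigma>h by simp
    also have "\<dots> = x <# (h' <# K')" unfolding secact_def using hK fixed \<sigma>h by simp
    finally show "x \<in> conjs G h' K'" using l_coset_fixed_iff_conjs[OF K' h'c[folded h'_def] xc] by simp
  qed
qed

end

section \<open>Tambara functors and their ideals\<close>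

locale tambara_functor = group G for G :: "'g monoid" (structure) +
  fixes T :: "('g, 'a) tambara"
  assumes tambara: "tambara G T"
begin

lemma lev_cring: "subgroup H G \<Longrightarrow> cring (tlev T H)"
  using tambara unfolding tambara_def by (elim conjE) metis

lemma lev_ring: "subgroup H G \<Longrightarrow> ring (tlev T H)"
  using lev_cring cring.axioms(1) by blast

lemma res_hom:
  "subgroup H G \<Longrightarrow> subgroup K G \<Longrightarrow> K \<subseteq> H \<Longrightarrow> tres T H K \<in> ring_hom (tlev T H) (tlev T K)"
  using tambara unfolding tambara_def by (elim conjE) metis

lemma tr_hom:
  "subgroup H G \<Longrightarrow> subgroup K G \<Longrightarrow> K \<subseteq> H \<Longrightarrow>
   ttr T K H \<in> hom (add_monoid (tlev T K)) (add_monoid (tlev T H))"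
  using tambara unfolding tambara_def by (elim conjE) metis

lemma nm_hom: "subgroup H G \<Longrightarrow> subgroup K G \<Longrightarrow> K \<subseteq> H \<Longrightarrow> tnm T K H \<in> hom (tlev T K) (tlev T H)"
  using tambara unfolding tambara_def by (elim conjE) metis

lemma nm_zero:
  "subgroup H G \<Longrightarrow> subgroup K G \<Longrightarrow> K \<subseteq> H \<Longrightarrow> tnm T K H \<zero>\<^bsub>tlev T K\<^esub> = \<zero>\<^bsub>tlev T H\<^esub>"
  using tambara unfolding tambara_def by (elim conjE) metis

lemma cj_hom:
  "g \<in> carrier G \<Longrightarrow> subgroup H G \<Longrightarrow> tcj T g H \<in> ring_hom (tlev T H) (tlev T (conjs G g H))"
  using tambara unfolding tambara_def by (elim conjE) metis

lemma tr_id: "subgroup H G \<Longrightarrow> x \<in> carrier (tlev T H) \<Longrightarrow> ttr T H H x = x"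
  using tambara unfolding tambara_def by (elim conjE) metis

lemma res_id: "subgroup H G \<Longrightarrow> x \<in> carrier (tlev T H) \<Longrightarrow> tres T H H x = x"
  using tambara unfolding tambara_def by (elim conjE) metis

lemma tr_tr:
  "subgroup H G \<Longrightarrow> subgroup K G \<Longrightarrow> subgroup L G \<Longrightarrow> L \<subseteq> K \<Longrightarrow> K \<subseteq> H \<Longrightarrow>
   x \<in> carrier (tlev T L) \<Longrightarrow> ttr T K H (ttr T L K x) = ttr T L H x"
  using tambara unfolding tambara_def by (elim conjE) metis

lemma cj_tr:
  "subgroup H G \<Longrightarrow> subgroup K G \<Longrightarrow> K \<subseteq> H \<Longrightarrow> g \<in> carrier G \<Longrightarrow> x \<in> carrier (tlev T K) \<Longrightarrow>
   tcj T g H (ttr T K H x) = ttr T (conjs G g K) (conjs G g H) (tcj T g K x)"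
  using tambara unfolding tambara_def by (elim conjE) metis

lemma frobenius:
  "subgroup H G \<Longrightarrow> subgroup K G \<Longrightarrow> K \<subseteq> H \<Longrightarrow> a \<in> carrier (tlev T K) \<Longrightarrow> b \<in> carrier (tlev T H) \<Longrightarrow>
   ttr T K H a \<otimes>\<^bsub>tlev T H\<^esub> b = ttr T K H (a \<otimes>\<^bsub>tlev T K\<^esub> tres T H K b)"
  using tambara unfolding tambara_def by (elim conjE) metis

lemma res_tr_mackey:
  "subgroup H G \<Longrightarrow> subgroup K G \<Longrightarrow> subgroup L G \<Longrightarrow> K \<subseteq> H \<Longrightarrow> L \<subseteq> H \<Longrightarrow>
   a \<in> carrier (tlev T K) \<Longrightarrow> tres T H L (ttr T K H a) = mackey_tr_rhs G T H L K a"
  using tambara unfolding tambara_def by (elim conjE) metis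

lemma nm_add_reciprocity:
  "subgroup H G \<Longrightarrow> subgroup K G \<Longrightarrow> K \<subseteq> H \<Longrightarrow> a \<in> carrier (tlev T K) \<Longrightarrow> b \<in> carrier (tlev T K) \<Longrightarrow>
   tnm T K H (a \<oplus>\<^bsub>tlev T K\<^esub> b) = nm_sum_rhs G T H K a b"
  using tambara unfolding tambara_def by (elim conjE) metis

lemma nm_tr_reciprocity:
  "subgroup H G \<Longrightarrow> subgroup K G \<Longrightarrow> subgroup L G \<Longrightarrow> L \<subseteq> K \<Longrightarrow> K \<subseteq> H \<Longrightarrow>
   a \<in> carrier (tlev T L) \<Longrightarrow> tnm T K H (ttr T L K a) = nm_tr_rhs G T H K L a"
  using tambara unfolding tambara_def by (elim conjE) metis

lemma res_closed:
  "subgroup H G \<Longrightarrow> subgroup K G \<Longrightarrow> K \<subseteq> H \<Longrightarrow> x \<in> carrier (tlev T H) \<Longrightarrow>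
   tres T H K x \<in> carrier (tlev T K)"
  by (rule ring_hom_closed[OF res_hom])

lemma res_mult:
  "subgroup H G \<Longrightarrow> subgroup K G \<Longrightarrow> K \<subseteq> H \<Longrightarrow> x \<in> carrier (tlev T H) \<Longrightarrow> y \<in> carrier (tlev T H) \<Longrightarrow>
   tres T H K (x \<otimes>\<^bsub>tlev T H\<^esub> y) = tres T H K x \<otimes>\<^bsub>tlev T K\<^esub> tres T H K y"
  by (rule ring_hom_mult[OF res_hom])

lemma res_add:
  "subgroup H G \<Longrightarrow> subgroup K G \<Longrightarrow> K \<subseteq> H \<Longrightarrow> x \<in> carrier (tlev T H) \<Longrightarrow> y \<in> carrier (tlev T H) \<Longrightarrow>
   tres T H K (x \<oplus>\<^bsub>tlev T H\<^esub> y) = tres T H K x \<oplus>\<^bsub>tlev T K\<^esub> tres T H K y"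
  by (rule ring_hom_add[OF res_hom])

lemma res_zero:
  "subgroup H G \<Longrightarrow> subgroup K G \<Longrightarrow> K \<subseteq> H \<Longrightarrow> tres T H K \<zero>\<^bsub>tlev T H\<^esub> = \<zero>\<^bsub>tlev T K\<^esub>"
  using ring_hom_zero[OF res_hom lev_ring lev_ring] .

lemma cj_closed:
  "g \<in> carrier G \<Longrightarrow> subgroup H G \<Longrightarrow> x \<in> carrier (tlev T H) \<Longrightarrow>
   tcj T g H x \<in> carrier (tlev T (conjs G g H))"
  by (rule ring_hom_closed[OF cj_hom])

lemma cj_mult:
  "g \<in> carrier G \<Longrightarrow> subgroup H G \<Longrightarrow> x \<in> carrier (tlev T H) \<Longrightarrow> y \<in> carrier (tlev T H) \<Longrightarrow>
   tcj T g H (x \<otimes>\<^bsub>tlev T H\<^esub> y) = tcj T g H x \<otimes>\<^bsub>tlev T (conjs G g H)\<^esub> tcj T g H y"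
  by (rule ring_hom_mult[OF cj_hom])

lemma cj_add:
  "g \<in> carrier G \<Longrightarrow> subgroup H G \<Longrightarrow> x \<in> carrier (tlev T H) \<Longrightarrow> y \<in> carrier (tlev T H) \<Longrightarrow>
   tcj T g H (x \<oplus>\<^bsub>tlev T H\<^esub> y) = tcj T g H x \<oplus>\<^bsub>tlev T (conjs G g H)\<^esub> tcj T g H y"
  by (rule ring_hom_add[OF cj_hom])

lemma cj_zero:
  "g \<in> carrier G \<Longrightarrow> subgroup H G \<Longrightarrow> tcj T g H \<zero>\<^bsub>tlev T H\<^esub> = \<zero>\<^bsub>tlev T (conjs G g H)\<^esub>"
  using ring_hom_zero[OF cj_hom lev_ring lev_ring[OF conjs_subgroup]] .

lemma tr_closed:
  "subgroup H G \<Longrightarrow> subgroup K G \<Longrightarrow> K \<subseteq> H \<Longrightarrow> x \<in> carrier (tlev T K) \<Longrightarrow>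
   ttr T K H x \<in> carrier (tlev T H)"
  using hom_in_carrier[OF tr_hom, of H K x] by simp

lemma tr_add:
  "subgroup H G \<Longrightarrow> subgroup K G \<Longrightarrow> K \<subseteq> H \<Longrightarrow> x \<in> carrier (tlev T K) \<Longrightarrow> y \<in> carrier (tlev T K) \<Longrightarrow>
   ttr T K H (x \<oplus>\<^bsub>tlev T K\<^esub> y) = ttr T K H x \<oplus>\<^bsub>tlev T H\<^esub> ttr T K H y"
  using hom_mult[OF tr_hom, of H K x y] by simp

lemma tr_zero:
  assumes "subgroup H G" "subgroup K G" "K \<subseteq> H"
  shows "ttr T K H \<zero>\<^bsub>tlev T K\<^esub> = \<zero>\<^bsub>tlev T H\<^esub>"
  using hom_one[OF tr_hom[OF assms] abelian_group.a_group abelian_group.a_group]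
    ring.is_abelian_group[OF lev_ring] assms by simp

lemma nm_closed:
  "subgroup H G \<Longrightarrow> subgroup K G \<Longrightarrow> K \<subseteq> H \<Longrightarrow> x \<in> carrier (tlev T K) \<Longrightarrow>
   tnm T K H x \<in> carrier (tlev T H)"
  by (rule hom_in_carrier[OF nm_hom])

lemma nm_mult:
  "subgroup H G \<Longrightarrow> subgroup K G \<Longrightarrow> K \<subseteq> H \<Longrightarrow> x \<in> carrier (tlev T K) \<Longrightarrow> y \<in> carrier (tlev T K) \<Longrightarrow>
   tnm T K H (x \<otimes>\<^bsub>tlev T K\<^esub> y) = tnm T K H x \<otimes>\<^bsub>tlev T H\<^esub> tnm T K H y"
  by (rule hom_mult[OF nm_hom])

definition green_ideal :: "('g set \<Rightarrow> 'a set) \<Rightarrow> bool" where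
  "green_ideal I \<longleftrightarrow>
    (\<forall>H. \<not> subgroup H G \<longrightarrow> I H = {}) \<and>
    (\<forall>H. subgroup H G \<longrightarrow> ideal (I H) (tlev T H)) \<and>
    (\<forall>H K. subgroup H G \<longrightarrow> subgroup K G \<longrightarrow> K \<subseteq> H \<longrightarrow>
        tres T H K ` I H \<subseteq> I K \<and> ttr T K H ` I K \<subseteq> I H) \<and>
    (\<forall>H. subgroup H G \<longrightarrow> (\<forall>g \<in> carrier G. tcj T g H ` I H \<subseteq> I (conjs G g H)))"

lemma tideal_iff_green_ideal:
  "tideal G T I \<longleftrightarrow> green_ideal I \<and>
     (\<forall>H K. subgroup H G \<longrightarrow> subgroup K G \<longrightarrow> K \<subseteq> H \<longrightarrow> tnm T K H ` I K \<subseteq> I H)"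
  unfolding tideal_def green_ideal_def image_subset_iff by fastforce

lemma green_ideal_off: "green_ideal I \<Longrightarrow> \<not> subgroup H G \<Longrightarrow> I H = {}"
  unfolding green_ideal_def by (simp add: image_subset_iff)

lemma green_ideal_ideal: "green_ideal I \<Longrightarrow> subgroup H G \<Longrightarrow> ideal (I H) (tlev T H)"
  unfolding green_ideal_def by (simp add: image_subset_iff)

lemma green_ideal_carrier: "green_ideal I \<Longrightarrow> subgroup H G \<Longrightarrow> I H \<subseteq> carrier (tlev T H)"
  using ideal.Icarr[OF green_ideal_ideal] by blast

lemma green_ideal_res:
  "green_ideal I \<Longrightarrow> subgroup H G \<Longrightarrow> subgroup K G \<Longrightarrow> K \<subseteq> H \<Longrightarrow> x \<in> I H \<Longrightarrow> tres T H K x \<in> I K"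
  unfolding green_ideal_def by (simp add: image_subset_iff)

lemma green_ideal_tr:
  "green_ideal I \<Longrightarrow> subgroup H G \<Longrightarrow> subgroup K G \<Longrightarrow> K \<subseteq> H \<Longrightarrow> x \<in> I K \<Longrightarrow> ttr T K H x \<in> I H"
  unfolding green_ideal_def by (simp add: image_subset_iff)

lemma green_ideal_cj:
  "green_ideal I \<Longrightarrow> subgroup H G \<Longrightarrow> g \<in> carrier G \<Longrightarrow> x \<in> I H \<Longrightarrow> tcj T g H x \<in> I (conjs G g H)"
  unfolding green_ideal_def by (simp add: image_subset_iff)

lemma green_ideal_zero: "green_ideal I \<Longrightarrow> subgroup H G \<Longrightarrow> \<zero>\<^bsub>tlev T H\<^esub> \<in> I H"
  by (rule additive_subgroup.zero_closed[OF ideal.axioms(1)[OF green_ideal_ideal]])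

lemma green_ideal_add:
  "green_ideal I \<Longrightarrow> subgroup H G \<Longrightarrow> x \<in> I H \<Longrightarrow> y \<in> I H \<Longrightarrow> x \<oplus>\<^bsub>tlev T H\<^esub> y \<in> I H"
  by (rule additive_subgroup.a_closed[OF ideal.axioms(1)[OF green_ideal_ideal]])

lemma green_ideal_mult:
  "green_ideal I \<Longrightarrow> subgroup H G \<Longrightarrow> r \<in> carrier (tlev T H) \<Longrightarrow> x \<in> I H \<Longrightarrow>
   r \<otimes>\<^bsub>tlev T H\<^esub> x \<in> I H"
  by (rule ideal.I_l_closed[OF green_ideal_ideal])

lemma tideal_green_ideal: "tideal G T I \<Longrightarrow> green_ideal I"
  by (simp add: tideal_iff_green_ideal)

lemma tideal_nm:
  "tideal G T I \<Longrightarrow> subgroup H G \<Longrightarrow> subgroup K G \<Longrightarrow> K \<subseteq> H \<Longrightarrow> x \<in> I K \<Longrightarrow> tnm T K H x \<in> I H"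
  unfolding tideal_def by (simp add: image_subset_iff)

lemma tunit_tideal: "tideal G T (tunit G T)"
  unfolding tideal_def tunit_def
proof (intro conjI allI impI ballI image_subsetI)
  fix H assume "subgroup H G"
  then show "ideal (if subgroup H G then carrier (tlev T H) else {}) (tlev T H)"
    using ring.oneideal[OF lev_ring] by simp
next
  fix H g x assume "subgroup H G" "g \<in> carrier G"
    "x \<in> (if subgroup H G then carrier (tlev T H) else {})"
  then show "tcj T g H x \<in> (if subgroup (conjs G g H) G then carrier (tlev T (conjs G g H)) else {})"
    using cj_closed conjs_subgroup by simp
qed (auto intro: res_closed tr_closed nm_closed)

lemma tgen_mem_iff:
  "x \<in> tgen G T Xs H \<longleftrightarrow>
     subgroup H G \<and> (\<forall>J. tideal G T J \<longrightarrow> (\<forall>H'. subgroup H' G \<longrightarrow> Xs H' \<subseteq> J H') \<longrightarrow> x \<in> J H)"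
  unfolding tgen_def by auto

lemma tgen_superset: "subgroup H G \<Longrightarrow> Xs H \<subseteq> tgen G T Xs H"
  unfolding tgen_def by auto

lemma tgen_least:
  assumes J: "tideal G T J" and XJ: "\<And>H. subgroup H G \<Longrightarrow> Xs H \<subseteq> J H"
  shows "tgen G T Xs \<le> J"
proof (rule le_funI)
  fix H show "tgen G T Xs H \<subseteq> J H"
    using J XJ by (cases "subgroup H G") (auto simp: tgen_def)
qed

lemma tgen_tideal:
  assumes Xs: "\<And>H. subgroup H G \<Longrightarrow> Xs H \<subseteq> carrier (tlev T H)"
  shows "tideal G T (tgen G T Xs)"
  unfolding tideal_def
proof (intro conjI allI impI ballI image_subsetI)
  fix H assume H: "subgroup H G"
  let ?\<J> = "{J. tideal G T J \<and> (\<forall>H'. subgroup H' G \<longrightarrow> Xs H' \<subseteq> J H')}"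
  have "tunit G T \<in> ?\<J>" using tunit_tideal Xs by (simp add: tunit_def)
  then have "ideal (\<Inter>J\<in>?\<J>. J H) (tlev T H)"
  proof (intro ring.i_Intersect[OF lev_ring[OF H]])
    fix I assume "I \<in> (\<lambda>J. J H) ` ?\<J>"
    then obtain J where "tideal G T J" "I = J H" by blast
    then show "ideal I (tlev T H)" using green_ideal_ideal[OF tideal_green_ideal H] by simp
  qed blast
  then show "ideal (tgen G T Xs H) (tlev T H)" unfolding tgen_def using H by simp
next
  fix H K x assume H: "subgroup H G" and K: "subgroup K G" and KH: "K \<subseteq> H"
  { assume "x \<in> tgen G T Xs H"
    then show "tres T H K x \<in> tgen G T Xs K"
      using K green_ideal_res[OF tideal_green_ideal H K KH] unfolding tgen_mem_iff by blast }
  { assume "x \<in> tgen G T Xs K"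
    then show "ttr T K H x \<in> tgen G T Xs H"
      using H green_ideal_tr[OF tideal_green_ideal H K KH] unfolding tgen_mem_iff by blast }
  { assume "x \<in> tgen G T Xs K"
    then show "tnm T K H x \<in> tgen G T Xs H"
      using H tideal_nm[OF _ H K KH] unfolding tgen_mem_iff by blast }
next
  fix H g x assume H: "subgroup H G" and g: "g \<in> carrier G" and "x \<in> tgen G T Xs H"
  then show "tcj T g H x \<in> tgen G T Xs (conjs G g H)"
    using conjs_subgroup[OF g H] green_ideal_cj[OF tideal_green_ideal H g]
    unfolding tgen_mem_iff by blast
qed (simp add: tgen_def)

lemma tgen_tideal_eq: "tideal G T I \<Longrightarrow> tgen G T I = I"
proof (rule antisym)
  assume I: "tideal G T I"
  show "tgen G T I \<le> I" by (rule tgen_least[OF I]) simp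
  show "I \<le> tgen G T I"
  proof (rule le_funI)
    fix H show "I H \<subseteq> tgen G T I H"
      using tgen_superset green_ideal_off[OF tideal_green_ideal[OF I]] by (cases "subgroup H G") auto
  qed
qed

lemma tgen_mono:
  assumes "\<And>H. subgroup H G \<Longrightarrow> Xs H \<subseteq> Ys H"
  shows "tgen G T Xs \<le> tgen G T Ys"
proof (rule le_funI, rule subsetI)
  fix H x assume "x \<in> tgen G T Xs H"
  then show "x \<in> tgen G T Ys H" unfolding tgen_mem_iff using assms by (meson subset_trans)
qed

lemma tprod_tideal:
  assumes I: "tideal G T I" and J: "tideal G T J"
  shows "tideal G T (tprod G T I J)"
  unfolding tprod_def
proof (rule tgen_tideal)
  fix H assume H: "subgroup H G"
  interpret R: cring "tlev T H" by (rule lev_cring[OF H])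
  show "{x \<otimes>\<^bsub>tlev T H\<^esub> y |x y. x \<in> I H \<and> y \<in> J H} \<subseteq> carrier (tlev T H)"
    using green_ideal_carrier[OF tideal_green_ideal[OF I] H]
      green_ideal_carrier[OF tideal_green_ideal[OF J] H] by auto
qed

lemma tprod_mem: "subgroup H G \<Longrightarrow> x \<in> I H \<Longrightarrow> y \<in> J H \<Longrightarrow> x \<otimes>\<^bsub>tlev T H\<^esub> y \<in> tprod G T I J H"
  unfolding tprod_def by (rule subsetD[OF tgen_superset]) blast+

lemma tprod_mono:
  assumes "I \<le> I'" and "J \<le> J'"
  shows "tprod G T I J \<le> tprod G T I' J'"
  unfolding tprod_def by (rule tgen_mono) (use assms in \<open>fastforce simp: le_fun_def\<close>)

lemma tprod_le_right:
  assumes I: "tideal G T I" and J: "tideal G T J"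
  shows "tprod G T I J \<le> J"
  unfolding tprod_def
proof (rule tgen_least[OF J], rule subsetI)
  fix H z assume H: "subgroup H G" and "z \<in> {x \<otimes>\<^bsub>tlev T H\<^esub> y |x y. x \<in> I H \<and> y \<in> J H}"
  then obtain x y where "z = x \<otimes>\<^bsub>tlev T H\<^esub> y" "x \<in> I H" "y \<in> J H" by blast
  then show "z \<in> J H"
    using green_ideal_mult[OF tideal_green_ideal[OF J] H] green_ideal_carrier[OF tideal_green_ideal[OF I] H]
    by blast
qed

lemma tpow_tideal: "tideal G T I \<Longrightarrow> tideal G T (tpow G T I n)"
  by (induction n) (simp_all add: tunit_tideal tprod_tideal)

lemma tpow_mono: "I \<le> J \<Longrightarrow> tpow G T I n \<le> tpow G T J n"
  by (induction n) (simp_all add: tprod_mono)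

lemma tgen1_tideal: "subgroup H G \<Longrightarrow> x \<in> carrier (tlev T H) \<Longrightarrow> tideal G T (tgen1 G T H x)"
  unfolding tgen1_def by (rule tgen_tideal) simp

lemma tgen1_mem: "subgroup H G \<Longrightarrow> x \<in> tgen1 G T H x H"
  unfolding tgen1_def using tgen_superset[of H "\<lambda>H'. if H' = H then {x} else {}"] by simp

lemma tgen1_le: "tideal G T I \<Longrightarrow> x \<in> I H \<Longrightarrow> tgen1 G T H x \<le> I"
  unfolding tgen1_def by (rule tgen_least) simp_all

lemma trad_mono:
  assumes "I \<le> J"
  shows "trad G T I \<le> trad G T J"
proof (rule le_funI, rule subsetI)
  fix H x assume "x \<in> trad G T I H"
  then have "subgroup H G" "x \<in> carrier (tlev T H)" "\<exists>n\<ge>1. tpow G T (tgen1 G T H x) n \<le> J"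
    unfolding trad_def using assms by (auto split: if_splits intro: order_trans)
  then show "x \<in> trad G T J H" unfolding trad_def by simp
qed

lemma le_trad:
  assumes I: "tideal G T I"
  shows "I \<le> trad G T I"
proof (rule le_funI, rule subsetI)
  fix H x assume x: "x \<in> I H"
  then have H: "subgroup H G" using green_ideal_off[OF tideal_green_ideal[OF I]] by blast
  have xc: "x \<in> carrier (tlev T H)" using x green_ideal_carrier[OF tideal_green_ideal[OF I] H] by blast
  have "tpow G T (tgen1 G T H x) 1 = tprod G T (tunit G T) (tgen1 G T H x)" by simp
  also have "\<dots> \<le> tgen1 G T H x" by (rule tprod_le_right[OF tunit_tideal tgen1_tideal[OF H xc]])
  also have "\<dots> \<le> I" by (rule tgen1_le[OF I x])
  finally show "x \<in> trad G T I H" unfolding trad_def using H xc by auto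
qed

lemma tprime_tideal: "tprime G T Q \<Longrightarrow> tideal G T Q"
  unfolding tprime_def by blast

lemma tpow_le_prime:
  assumes Q: "tprime G T Q" and J: "tideal G T J"
  shows "tpow G T J n \<le> Q \<Longrightarrow> J \<le> Q"
proof (induction n)
  case 0
  have "\<one>\<^bsub>tlev T (carrier G)\<^esub> \<in> tunit G T (carrier G)"
    using subgroup_self ring.ring_simprules(6)[OF lev_ring] by (simp add: tunit_def)
  then show ?case using 0 Q unfolding tprime_def by (auto simp: le_fun_def)
next
  case (Suc n)
  then show ?case using Q tpow_tideal[OF J] J unfolding tprime_def by auto
qed

lemma trad_prime_le:
  assumes Q: "tprime G T Q"
  shows "trad G T Q \<le> Q"
proof (rule le_funI, rule subsetI)
  fix H x assume "x \<in> trad G T Q H"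
  then have H: "subgroup H G" and xc: "x \<in> carrier (tlev T H)"
    and "\<exists>n\<ge>1. tpow G T (tgen1 G T H x) n \<le> Q"
    unfolding trad_def by (auto split: if_splits)
  then have "tgen1 G T H x \<le> Q" using tpow_le_prime[OF Q tgen1_tideal[OF H xc]] by blast
  then show "x \<in> Q H" using tgen1_mem[OF H] by (auto simp: le_fun_def)
qed

lemma tjoin_eq_greatest:
  assumes P: "P \<in> \<I>" and radical: "\<I> \<subseteq> radid G T" and greatest: "\<And>I. I \<in> \<I> \<Longrightarrow> I \<le> P"
  shows "tjoin G T \<I> = P"
proof -
  have "(\<lambda>H. \<Union>I\<in>\<I>. I H) = P" using P greatest by (auto simp: le_fun_def)
  moreover have "tideal G T P" "trad G T P = P" using P radical by (auto simp: radid_def)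
  ultimately show ?thesis unfolding tjoin_def by (simp add: tgen_tideal_eq)
qed

section \<open>Tambara ideals generated by norm-stable families\<close>

definition norm_stable :: "('g set \<Rightarrow> 'a set) \<Rightarrow> bool" where
  "norm_stable Xs \<longleftrightarrow>
    (\<forall>H. subgroup H G \<longrightarrow> Xs H \<subseteq> carrier (tlev T H)) \<and>
    (\<forall>H K. subgroup H G \<longrightarrow> subgroup K G \<longrightarrow> K \<subseteq> H \<longrightarrow>
        tres T H K ` Xs H \<subseteq> Xs K \<and> tnm T K H ` Xs K \<subseteq> Xs H) \<and>
    (\<forall>H. subgroup H G \<longrightarrow> (\<forall>g \<in> carrier G. tcj T g H ` Xs H \<subseteq> Xs (conjs G g H)))"

lemma norm_stable_carrier:
  "norm_stable Xs \<Longrightarrow> subgroup H G \<Longrightarrow> x \<in> Xs H \<Longrightarrow> x \<in> carrier (tlev T H)"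
  unfolding norm_stable_def by auto

lemma norm_stable_res:
  "norm_stable Xs \<Longrightarrow> subgroup H G \<Longrightarrow> subgroup K G \<Longrightarrow> K \<subseteq> H \<Longrightarrow> x \<in> Xs H \<Longrightarrow> tres T H K x \<in> Xs K"
  unfolding norm_stable_def by (simp add: image_subset_iff)

lemma norm_stable_nm:
  "norm_stable Xs \<Longrightarrow> subgroup H G \<Longrightarrow> subgroup K G \<Longrightarrow> K \<subseteq> H \<Longrightarrow> x \<in> Xs K \<Longrightarrow> tnm T K H x \<in> Xs H"
  unfolding norm_stable_def by (simp add: image_subset_iff)

lemma norm_stable_cj:
  "norm_stable Xs \<Longrightarrow> subgroup H G \<Longrightarrow> g \<in> carrier G \<Longrightarrow> x \<in> Xs H \<Longrightarrow> tcj T g H x \<in> Xs (conjs G g H)"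
  unfolding norm_stable_def by (simp add: image_subset_iff)

text \<open>The number \<open>n\<close> of summands is the measure of the inner induction in \<open>tr_sums_nm\<close>.\<close>

inductive tr_sum :: "('g set \<Rightarrow> 'a set) \<Rightarrow> nat \<Rightarrow> 'g set \<Rightarrow> 'a \<Rightarrow> bool" for Xs where
  zero: "subgroup M G \<Longrightarrow> tr_sum Xs 0 M \<zero>\<^bsub>tlev T M\<^esub>"
| add: "subgroup M G \<Longrightarrow> subgroup K G \<Longrightarrow> K \<subseteq> M \<Longrightarrow> s \<in> carrier (tlev T K) \<Longrightarrow> x \<in> Xs K \<Longrightarrow>
        tr_sum Xs n M e \<Longrightarrow> tr_sum Xs (Suc n) M (ttr T K M (s \<otimes>\<^bsub>tlev T K\<^esub> x) \<oplus>\<^bsub>tlev T M\<^esub> e)"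

definition tr_sums :: "('g set \<Rightarrow> 'a set) \<Rightarrow> 'g set \<Rightarrow> 'a set" where
  "tr_sums Xs M = {e. \<exists>n. tr_sum Xs n M e}"

lemma tr_sum_subgroup: "tr_sum Xs n M e \<Longrightarrow> subgroup M G"
  by (induction rule: tr_sum.induct)

lemma tr_term_closed:
  assumes Xs: "norm_stable Xs" and M: "subgroup M G" and K: "subgroup K G" and KM: "K \<subseteq> M"
    and s: "s \<in> carrier (tlev T K)" and x: "x \<in> Xs K"
  shows "ttr T K M (s \<otimes>\<^bsub>tlev T K\<^esub> x) \<in> carrier (tlev T M)"
proof -
  interpret R: cring "tlev T K" by (rule lev_cring[OF K])
  show ?thesis using s norm_stable_carrier[OF Xs K x] by (intro tr_closed[OF M K KM]) simp
qed

lemma tr_sum_carrier: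
  assumes Xs: "norm_stable Xs"
  shows "tr_sum Xs n M e \<Longrightarrow> e \<in> carrier (tlev T M)"
proof (induction rule: tr_sum.induct)
  case (zero M)
  then show ?case using cring.axioms(1)[OF lev_cring] ring.ring_simprules(2) by blast
next
  case (add M K s x n e)
  interpret R: cring "tlev T M" by (rule lev_cring[OF add.hyps(1)])
  show ?case using tr_term_closed[OF Xs add.hyps(1-5)] add.IH by simp
qed

lemma tr_sum_single:
  assumes Xs: "norm_stable Xs" and M: "subgroup M G" and K: "subgroup K G" and KM: "K \<subseteq> M"
    and s: "s \<in> carrier (tlev T K)" and x: "x \<in> Xs K"
  shows "tr_sum Xs 1 M (ttr T K M (s \<otimes>\<^bsub>tlev T K\<^esub> x))"
proof -
  interpret R: cring "tlev T M" by (rule lev_cring[OF M])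
  have "tr_sum Xs 1 M (ttr T K M (s \<otimes>\<^bsub>tlev T K\<^esub> x) \<oplus>\<^bsub>tlev T M\<^esub> \<zero>\<^bsub>tlev T M\<^esub>)"
    using tr_sum.add[OF M K KM s x tr_sum.zero[where Xs=Xs, OF M]] by simp
  then show ?thesis using tr_term_closed[OF assms] by simp
qed

lemma tr_sum_add:
  assumes Xs: "norm_stable Xs"
  shows "tr_sum Xs n M e \<Longrightarrow> tr_sum Xs m M e' \<Longrightarrow> tr_sum Xs (n + m) M (e \<oplus>\<^bsub>tlev T M\<^esub> e')"
proof (induction rule: tr_sum.induct)
  case (zero M)
  interpret R: cring "tlev T M" by (rule lev_cring[OF zero.hyps])
  show ?case using zero.prems tr_sum_carrier[OF Xs zero.prems] by simp
next
  case (add M K s x n e)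
  interpret R: cring "tlev T M" by (rule lev_cring[OF add.hyps(1)])
  have "tr_sum Xs (Suc (n + m)) M
      (ttr T K M (s \<otimes>\<^bsub>tlev T K\<^esub> x) \<oplus>\<^bsub>tlev T M\<^esub> (e \<oplus>\<^bsub>tlev T M\<^esub> e'))"
    by (rule tr_sum.add[OF add.hyps(1-5) add.IH[OF add.prems]])
  then show ?case
    using tr_term_closed[OF Xs add.hyps(1-5)] tr_sum_carrier[OF Xs add.hyps(6)]
      tr_sum_carrier[OF Xs add.prems] by (simp add: R.a_assoc)
qed

lemma tr_sum_mult:
  assumes Xs: "norm_stable Xs"
  shows "tr_sum Xs n M e \<Longrightarrow> r \<in> carrier (tlev T M) \<Longrightarrow> tr_sum Xs n M (r \<otimes>\<^bsub>tlev T M\<^esub> e)"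
proof (induction arbitrary: r rule: tr_sum.induct)
  case (zero M)
  interpret R: cring "tlev T M" by (rule lev_cring[OF zero.hyps])
  show ?case using zero.prems tr_sum.zero[where Xs=Xs, OF zero.hyps] by simp
next
  case (add M K s x n e)
  note M = add.hyps(1) and K = add.hyps(2) and KM = add.hyps(3) and s = add.hyps(4)
    and x = add.hyps(5) and r = add.prems
  interpret RK: cring "tlev T K" by (rule lev_cring[OF K])
  interpret RM: cring "tlev T M" by (rule lev_cring[OF M])
  have xc: "x \<in> carrier (tlev T K)" by (rule norm_stable_carrier[OF Xs K x])
  have rK: "tres T M K r \<in> carrier (tlev T K)" by (rule res_closed[OF M K KM r])
  have "r \<otimes>\<^bsub>tlev T M\<^esub> ttr T K M (s \<otimes>\<^bsub>tlev T K\<^esub> x)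
      = ttr T K M (s \<otimes>\<^bsub>tlev T K\<^esub> x) \<otimes>\<^bsub>tlev T M\<^esub> r"
    using r tr_term_closed[OF Xs M K KM s x] by (simp add: RM.m_comm)
  also have "\<dots> = ttr T K M ((s \<otimes>\<^bsub>tlev T K\<^esub> tres T M K r) \<otimes>\<^bsub>tlev T K\<^esub> x)"
    using s xc rK by (simp add: frobenius[OF M K KM _ r] RK.m_ac)
  finally have "r \<otimes>\<^bsub>tlev T M\<^esub> (ttr T K M (s \<otimes>\<^bsub>tlev T K\<^esub> x) \<oplus>\<^bsub>tlev T M\<^esub> e)
      = ttr T K M ((s \<otimes>\<^bsub>tlev T K\<^esub> tres T M K r) \<otimes>\<^bsub>tlev T K\<^esub> x) \<oplus>\<^bsub>tlev T M\<^esub> r \<otimes>\<^bsub>tlev T M\<^esub> e"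
    using r tr_term_closed[OF Xs M K KM s x] tr_sum_carrier[OF Xs add.hyps(6)] by (simp add: RM.r_distr)
  moreover have "s \<otimes>\<^bsub>tlev T K\<^esub> tres T M K r \<in> carrier (tlev T K)" using s rK by simp
  ultimately show ?case using tr_sum.add[OF M K KM _ x add.IH[OF r]] by simp
qed

lemma tr_sum_tr:
  assumes Xs: "norm_stable Xs" and M': "subgroup M' G"
  shows "tr_sum Xs n M e \<Longrightarrow> M \<subseteq> M' \<Longrightarrow> tr_sum Xs n M' (ttr T M M' e)"
proof (induction rule: tr_sum.induct)
  case (zero M)
  then show ?case using tr_zero[OF M' zero.hyps] tr_sum.zero[where Xs=Xs, OF M'] by simp
next
  case (add M K s x n e)
  note M = add.hyps(1) and K = add.hyps(2) and KM = add.hyps(3) and s = add.hyps(4)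
    and x = add.hyps(5) and MM' = add.prems
  interpret RK: cring "tlev T K" by (rule lev_cring[OF K])
  have sx: "s \<otimes>\<^bsub>tlev T K\<^esub> x \<in> carrier (tlev T K)" using s norm_stable_carrier[OF Xs K x] by simp
  have "ttr T M M' (ttr T K M (s \<otimes>\<^bsub>tlev T K\<^esub> x) \<oplus>\<^bsub>tlev T M\<^esub> e)
      = ttr T K M' (s \<otimes>\<^bsub>tlev T K\<^esub> x) \<oplus>\<^bsub>tlev T M'\<^esub> ttr T M M' e"
    using tr_add[OF M' M MM' tr_term_closed[OF Xs M K KM s x] tr_sum_carrier[OF Xs add.hyps(6)]]
      tr_tr[OF M' M K KM MM' sx] by simp
  then show ?case using tr_sum.add[OF M' K _ s x add.IH[OF MM']] KM MM' by simp
qed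

lemma cj_tr_term:
  assumes M: "subgroup M G" and K: "subgroup K G" and KM: "K \<subseteq> M" and g: "g \<in> carrier G"
    and s: "s \<in> carrier (tlev T K)" and x: "x \<in> carrier (tlev T K)"
  shows "tcj T g M (ttr T K M (s \<otimes>\<^bsub>tlev T K\<^esub> x))
    = ttr T (conjs G g K) (conjs G g M) (tcj T g K s \<otimes>\<^bsub>tlev T (conjs G g K)\<^esub> tcj T g K x)"
proof -
  interpret R: cring "tlev T K" by (rule lev_cring[OF K])
  show ?thesis using cj_tr[OF M K KM g] cj_mult[OF g K s x] s x by simp
qed

lemma tr_sum_cj:
  assumes Xs: "norm_stable Xs" and g: "g \<in> carrier G"
  shows "tr_sum Xs n M e \<Longrightarrow> tr_sum Xs n (conjs G g M) (tcj T g M e)"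
proof (induction rule: tr_sum.induct)
  case (zero M)
  then show ?case using cj_zero[OF g zero.hyps] tr_sum.zero[where Xs=Xs, OF conjs_subgroup[OF g zero.hyps]] by simp
next
  case (add M K s x n e)
  note M = add.hyps(1) and K = add.hyps(2) and KM = add.hyps(3) and s = add.hyps(4) and x = add.hyps(5)
  have "tcj T g M (ttr T K M (s \<otimes>\<^bsub>tlev T K\<^esub> x) \<oplus>\<^bsub>tlev T M\<^esub> e)
      = ttr T (conjs G g K) (conjs G g M) (tcj T g K s \<otimes>\<^bsub>tlev T (conjs G g K)\<^esub> tcj T g K x)
        \<oplus>\<^bsub>tlev T (conjs G g M)\<^esub> tcj T g M e"
    using cj_add[OF g M tr_term_closed[OF Xs M K KM s x] tr_sum_carrier[OF Xs add.hyps(6)]]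
      cj_tr_term[OF M K KM g s norm_stable_carrier[OF Xs K x]] by simp
  then show ?case
    using tr_sum.add[OF conjs_subgroup[OF g M] conjs_subgroup[OF g K] conjs_mono[OF KM]
        cj_closed[OF g K s] norm_stable_cj[OF Xs K g x] add.IH] by simp
qed

lemma tr_term_mem:
  assumes "norm_stable Xs" "subgroup M G" "subgroup K G" "K \<subseteq> M" "s \<in> carrier (tlev T K)" "x \<in> Xs K"
  shows "ttr T K M (s \<otimes>\<^bsub>tlev T K\<^esub> x) \<in> tr_sums Xs M"
  unfolding tr_sums_def using tr_sum_single[OF assms] by blast

lemma tr_sums_ideal:
  assumes Xs: "norm_stable Xs" and M: "subgroup M G"
  shows "ideal (tr_sums Xs M) (tlev T M)"
proof -
  interpret R: cring "tlev T M" by (rule lev_cring[OF M])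
  have carrier: "tr_sums Xs M \<subseteq> carrier (tlev T M)"
    using tr_sum_carrier[OF Xs] unfolding tr_sums_def by blast
  have mult: "r \<otimes>\<^bsub>tlev T M\<^esub> e \<in> tr_sums Xs M" if "e \<in> tr_sums Xs M" "r \<in> carrier (tlev T M)" for r e
    using that tr_sum_mult[OF Xs] unfolding tr_sums_def by blast
  show ?thesis
  proof (rule idealI[OF R.ring_axioms], rule subgroup.intro)
    show "tr_sums Xs M \<subseteq> carrier (add_monoid (tlev T M))" using carrier by simp
    show "\<one>\<^bsub>add_monoid (tlev T M)\<^esub> \<in> tr_sums Xs M"
      using tr_sum.zero[where Xs=Xs, OF M] unfolding tr_sums_def by auto
  next
    fix x y assume "x \<in> tr_sums Xs M" "y \<in> tr_sums Xs M"
    then show "x \<otimes>\<^bsub>add_monoid (tlev T M)\<^esub> y \<in> tr_sums Xs M"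
      using tr_sum_add[OF Xs] unfolding tr_sums_def by fastforce
  next
    fix x assume x: "x \<in> tr_sums Xs M"
    have "\<ominus>\<^bsub>tlev T M\<^esub> \<one>\<^bsub>tlev T M\<^esub> \<otimes>\<^bsub>tlev T M\<^esub> x \<in> tr_sums Xs M" by (rule mult[OF x]) simp
    moreover have "\<ominus>\<^bsub>tlev T M\<^esub> \<one>\<^bsub>tlev T M\<^esub> \<otimes>\<^bsub>tlev T M\<^esub> x = \<ominus>\<^bsub>tlev T M\<^esub> x"
      using x carrier by (simp add: R.l_minus subsetD)
    ultimately show "inv\<^bsub>add_monoid (tlev T M)\<^esub> x \<in> tr_sums Xs M" by (simp add: a_inv_def)
  next
    fix e r assume "e \<in> tr_sums Xs M" "r \<in> carrier (tlev T M)"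
    then show "r \<otimes>\<^bsub>tlev T M\<^esub> e \<in> tr_sums Xs M" "e \<otimes>\<^bsub>tlev T M\<^esub> r \<in> tr_sums Xs M"
      using mult carrier by (auto simp: R.m_comm subsetD)
  qed
qed

lemma res_cj_termE:
  assumes Xs: "norm_stable Xs" and K: "subgroup K G" and g: "g \<in> carrier G"
    and W: "subgroup W G" and WY: "W \<subseteq> conjs G g K"
    and s: "s \<in> carrier (tlev T K)" and x: "x \<in> Xs K"
  obtains s' x' where "s' \<in> carrier (tlev T W)" "x' \<in> Xs W"
    "tres T (conjs G g K) W (tcj T g K (s \<otimes>\<^bsub>tlev T K\<^esub> x)) = s' \<otimes>\<^bsub>tlev T W\<^esub> x'"
proof
  have Y: "subgroup (conjs G g K) G" by (rule conjs_subgroup[OF g K])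
  have xc: "x \<in> carrier (tlev T K)" by (rule norm_stable_carrier[OF Xs K x])
  show "tres T (conjs G g K) W (tcj T g K s) \<in> carrier (tlev T W)"
    by (rule res_closed[OF Y W WY cj_closed[OF g K s]])
  show "tres T (conjs G g K) W (tcj T g K x) \<in> Xs W"
    by (rule norm_stable_res[OF Xs Y W WY norm_stable_cj[OF Xs K g x]])
  show "tres T (conjs G g K) W (tcj T g K (s \<otimes>\<^bsub>tlev T K\<^esub> x))
      = tres T (conjs G g K) W (tcj T g K s) \<otimes>\<^bsub>tlev T W\<^esub> tres T (conjs G g K) W (tcj T g K x)"
    using cj_mult[OF g K s xc] res_mult[OF Y W WY cj_closed[OF g K s] cj_closed[OF g K xc]] by simp
qed

lemma tr_sums_res:
  assumes Xs: "norm_stable Xs" and L: "subgroup L G"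
  shows "tr_sum Xs n M e \<Longrightarrow> L \<subseteq> M \<Longrightarrow> tres T M L e \<in> tr_sums Xs L"
proof (induction rule: tr_sum.induct)
  case (zero M)
  then show ?case
    using res_zero[OF zero.hyps L] tr_sum.zero[where Xs=Xs, OF L] unfolding tr_sums_def by auto
next
  case (add M K s x n e)
  note M = add.hyps(1) and K = add.hyps(2) and KM = add.hyps(3) and s = add.hyps(4)
    and x = add.hyps(5) and LM = add.prems
  interpret RK: cring "tlev T K" by (rule lev_cring[OF K])
  interpret RL: cring "tlev T L" by (rule lev_cring[OF L])
  have "tres T M L (ttr T K M (s \<otimes>\<^bsub>tlev T K\<^esub> x)) \<in> tr_sums Xs L"
    unfolding res_tr_mackey[OF M K L KM LM RK.m_closed[OF s norm_stable_carrier[OF Xs K x]]]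
      mackey_tr_rhs_def Let_def
  proof (rule RL.finsum_mem_ideal[OF tr_sums_ideal[OF Xs L]], rule funcsetI)
    fix D assume D: "D \<in> dcosets G L M K"
    have g: "rep D \<in> carrier G"
      using rep_dcosets_mem[OF L M K LM KM D] subgroup.mem_carrier[OF M] by blast
    have W: "subgroup (L \<inter> conjs G (rep D) K) G"
      by (rule subgroups_Inter_pair[OF L conjs_subgroup[OF g K]])
    obtain s' x' where "s' \<in> carrier (tlev T (L \<inter> conjs G (rep D) K))" "x' \<in> Xs (L \<inter> conjs G (rep D) K)"
      and "tres T (conjs G (rep D) K) (L \<inter> conjs G (rep D) K) (tcj T (rep D) K (s \<otimes>\<^bsub>tlev T K\<^esub> x))
        = s' \<otimes>\<^bsub>tlev T (L \<inter> conjs G (rep D) K)\<^esub> x'"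
      using res_cj_termE[OF Xs K g W _ s x] by blast
    then show "ttr T (L \<inter> conjs G (rep D) K) L (tres T (conjs G (rep D) K) (L \<inter> conjs G (rep D) K)
        (tcj T (rep D) K (s \<otimes>\<^bsub>tlev T K\<^esub> x))) \<in> tr_sums Xs L"
      using tr_term_mem[OF Xs L W] by simp
  qed
  moreover have "tres T M L e \<in> tr_sums Xs L" by (rule add.IH[OF LM])
  ultimately show ?case
    using res_add[OF M L LM tr_term_closed[OF Xs M K KM s x] tr_sum_carrier[OF Xs add.hyps(6)]]
      additive_subgroup.a_closed[OF ideal.axioms(1)[OF tr_sums_ideal[OF Xs L]]] by simp
qed

lemma tr_sums_green_ideal:
  assumes Xs: "norm_stable Xs"
  shows "green_ideal (tr_sums Xs)"
  unfolding green_ideal_def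
proof (intro conjI allI impI ballI image_subsetI)
  fix H assume "\<not> subgroup H G"
  then show "tr_sums Xs H = {}" unfolding tr_sums_def using tr_sum_subgroup by blast
next
  fix H assume "subgroup H G"
  then show "ideal (tr_sums Xs H) (tlev T H)" by (rule tr_sums_ideal[OF Xs])
next
  fix H K e assume H: "subgroup H G" and K: "subgroup K G" and KH: "K \<subseteq> H"
  { assume "e \<in> tr_sums Xs H"
    then show "tres T H K e \<in> tr_sums Xs K"
      using tr_sums_res[OF Xs K _ KH] unfolding tr_sums_def by blast }
  { assume "e \<in> tr_sums Xs K"
    then show "ttr T K H e \<in> tr_sums Xs H"
      using tr_sum_tr[OF Xs H _ KH] unfolding tr_sums_def by blast }
next
  fix H g e assume "g \<in> carrier G" "e \<in> tr_sums Xs H"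
  then show "tcj T g H e \<in> tr_sums Xs (conjs G g H)"
    using tr_sum_cj[OF Xs] unfolding tr_sums_def by blast
qed

lemma tr_sum_SucE:
  assumes "tr_sum Xs (Suc n) K e"
  obtains K0 u x e' where "subgroup K0 G" "K0 \<subseteq> K" "u \<in> carrier (tlev T K0)" "x \<in> Xs K0"
    "tr_sum Xs n K e'" "e = ttr T K0 K (u \<otimes>\<^bsub>tlev T K0\<^esub> x) \<oplus>\<^bsub>tlev T K\<^esub> e'"
  using assms by (cases rule: tr_sum.cases) auto

lemma norm_stable_subset_tr_sums:
  assumes Xs: "norm_stable Xs" and H: "subgroup H G"
  shows "Xs H \<subseteq> tr_sums Xs H"
proof
  fix x assume x: "x \<in> Xs H"
  interpret R: cring "tlev T H" by (rule lev_cring[OF H])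
  have "ttr T H H (\<one>\<^bsub>tlev T H\<^esub> \<otimes>\<^bsub>tlev T H\<^esub> x) \<in> tr_sums Xs H"
    using tr_term_mem[OF Xs H H order_refl _ x] by simp
  then show "x \<in> tr_sums Xs H" using tr_id[OF H] norm_stable_carrier[OF Xs H x] by simp
qed

lemma tr_sum_mem_tideal:
  assumes Xs: "norm_stable Xs" and J: "tideal G T J" and XJ: "\<And>H. subgroup H G \<Longrightarrow> Xs H \<subseteq> J H"
  shows "tr_sum Xs n M e \<Longrightarrow> e \<in> J M"
proof (induction rule: tr_sum.induct)
  case (zero M)
  then show ?case by (rule green_ideal_zero[OF tideal_green_ideal[OF J]])
next
  case (add M K s x n e)
  have "s \<otimes>\<^bsub>tlev T K\<^esub> x \<in> J K"
    using green_ideal_mult[OF tideal_green_ideal[OF J] add.hyps(2,4)] XJ[OF add.hyps(2)] add.hyps(5) by blast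
  then have "ttr T K M (s \<otimes>\<^bsub>tlev T K\<^esub> x) \<in> J M"
    by (rule green_ideal_tr[OF tideal_green_ideal[OF J] add.hyps(1-3)])
  then show ?case using green_ideal_add[OF tideal_green_ideal[OF J] add.hyps(1) _ add.IH] by blast
qed

lemma norm_stable_mult_tr_sum_mem:
  assumes Xs: "norm_stable Xs" and Ys: "norm_stable Ys" and J: "tideal G T J"
    and XY: "\<And>H x y. subgroup H G \<Longrightarrow> x \<in> Xs H \<Longrightarrow> y \<in> Ys H \<Longrightarrow> x \<otimes>\<^bsub>tlev T H\<^esub> y \<in> J H"
  shows "tr_sum Ys n K v \<Longrightarrow> x \<in> Xs K \<Longrightarrow> x \<otimes>\<^bsub>tlev T K\<^esub> v \<in> J K"
proof (induction rule: tr_sum.induct)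
  case (zero K)
  interpret R: cring "tlev T K" by (rule lev_cring[OF zero.hyps])
  show ?case
    using green_ideal_zero[OF tideal_green_ideal[OF J] zero.hyps] norm_stable_carrier[OF Xs zero.hyps zero.prems]
    by simp
next
  case (add K K0 t y n e)
  note K = add.hyps(1) and K0 = add.hyps(2) and K0K = add.hyps(3) and t = add.hyps(4)
    and y = add.hyps(5) and x = add.prems
  interpret RK: cring "tlev T K" by (rule lev_cring[OF K])
  interpret RK0: cring "tlev T K0" by (rule lev_cring[OF K0])
  have xc: "x \<in> carrier (tlev T K)" by (rule norm_stable_carrier[OF Xs K x])
  have yc: "y \<in> carrier (tlev T K0)" by (rule norm_stable_carrier[OF Ys K0 y])
  have rx: "tres T K K0 x \<in> Xs K0" by (rule norm_stable_res[OF Xs K K0 K0K x])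
  have rxc: "tres T K K0 x \<in> carrier (tlev T K0)" by (rule norm_stable_carrier[OF Xs K0 rx])
  have "x \<otimes>\<^bsub>tlev T K\<^esub> ttr T K0 K (t \<otimes>\<^bsub>tlev T K0\<^esub> y)
      = ttr T K0 K (t \<otimes>\<^bsub>tlev T K0\<^esub> (tres T K K0 x \<otimes>\<^bsub>tlev T K0\<^esub> y))"
    using frobenius[OF K K0 K0K _ xc, of "t \<otimes>\<^bsub>tlev T K0\<^esub> y"] tr_term_closed[OF Ys K K0 K0K t y]
      t yc rxc xc by (simp add: RK.m_comm RK0.m_ac)
  also have "\<dots> \<in> J K"
    using green_ideal_tr[OF tideal_green_ideal[OF J] K K0 K0K]
      green_ideal_mult[OF tideal_green_ideal[OF J] K0 t XY[OF K0 rx y]] by blast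
  finally have "x \<otimes>\<^bsub>tlev T K\<^esub> ttr T K0 K (t \<otimes>\<^bsub>tlev T K0\<^esub> y) \<in> J K" .
  then show ?case
    using green_ideal_add[OF tideal_green_ideal[OF J] K _ add.IH[OF x]]
      tr_term_closed[OF Ys K K0 K0K t y] tr_sum_carrier[OF Ys add.hyps(6)] xc
    by (simp add: RK.r_distr)
qed

lemma tr_sum_mult_tr_sums_mem:
  assumes Xs: "norm_stable Xs" and Ys: "norm_stable Ys" and J: "tideal G T J"
    and XY: "\<And>H x y. subgroup H G \<Longrightarrow> x \<in> Xs H \<Longrightarrow> y \<in> Ys H \<Longrightarrow> x \<otimes>\<^bsub>tlev T H\<^esub> y \<in> J H"
  shows "tr_sum Xs n M u \<Longrightarrow> v \<in> tr_sums Ys M \<Longrightarrow> u \<otimes>\<^bsub>tlev T M\<^esub> v \<in> J M"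
proof (induction rule: tr_sum.induct)
  case (zero M)
  interpret R: cring "tlev T M" by (rule lev_cring[OF zero.hyps])
  show ?case
    using green_ideal_zero[OF tideal_green_ideal[OF J] zero.hyps]
      green_ideal_carrier[OF tr_sums_green_ideal[OF Ys] zero.hyps] zero.prems by auto
next
  case (add M K s x n e)
  note M = add.hyps(1) and K = add.hyps(2) and KM = add.hyps(3) and s = add.hyps(4)
    and x = add.hyps(5) and v = add.prems
  interpret RM: cring "tlev T M" by (rule lev_cring[OF M])
  interpret RK: cring "tlev T K" by (rule lev_cring[OF K])
  have xc: "x \<in> carrier (tlev T K)" by (rule norm_stable_carrier[OF Xs K x])
  have vc: "v \<in> carrier (tlev T M)" using green_ideal_carrier[OF tr_sums_green_ideal[OF Ys] M] v by blast
  have rv: "tres T M K v \<in> tr_sums Ys K" by (rule green_ideal_res[OF tr_sums_green_ideal[OF Ys] M K KM v])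
  then obtain m where "tr_sum Ys m K (tres T M K v)" unfolding tr_sums_def by blast
  then have "x \<otimes>\<^bsub>tlev T K\<^esub> tres T M K v \<in> J K"
    using norm_stable_mult_tr_sum_mem[OF Xs Ys J] XY x by blast
  then have "ttr T K M (s \<otimes>\<^bsub>tlev T K\<^esub> (x \<otimes>\<^bsub>tlev T K\<^esub> tres T M K v)) \<in> J M"
    using green_ideal_tr[OF tideal_green_ideal[OF J] M K KM]
      green_ideal_mult[OF tideal_green_ideal[OF J] K s] by blast
  moreover have "ttr T K M (s \<otimes>\<^bsub>tlev T K\<^esub> (x \<otimes>\<^bsub>tlev T K\<^esub> tres T M K v))
      = ttr T K M (s \<otimes>\<^bsub>tlev T K\<^esub> x) \<otimes>\<^bsub>tlev T M\<^esub> v"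
    using frobenius[OF M K KM _ vc, of "s \<otimes>\<^bsub>tlev T K\<^esub> x"] s xc res_closed[OF M K KM vc]
    by (simp add: RK.m_assoc)
  ultimately show ?case
    using green_ideal_add[OF tideal_green_ideal[OF J] M _ add.IH[OF v]]
      tr_term_closed[OF Xs M K KM s x] tr_sum_carrier[OF Xs add.hyps(6)] vc
    by (simp add: RM.l_distr)
qed

lemma nm_res_cj_term_mem:
  assumes Xs: "norm_stable Xs" and H: "subgroup H G" and W: "subgroup W G" and WH: "W \<subseteq> H"
    and K: "subgroup K G" and g: "g \<in> carrier G" and WY: "W \<subseteq> conjs G g K"
    and s: "s \<in> carrier (tlev T K)" and x: "x \<in> Xs K"
  shows "tnm T W H (tres T (conjs G g K) W (tcj T g K (s \<otimes>\<^bsub>tlev T K\<^esub> x))) \<in> tr_sums Xs H"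
proof -
  obtain s' x' where s': "s' \<in> carrier (tlev T W)" and x': "x' \<in> Xs W"
    and eq: "tres T (conjs G g K) W (tcj T g K (s \<otimes>\<^bsub>tlev T K\<^esub> x)) = s' \<otimes>\<^bsub>tlev T W\<^esub> x'"
    using res_cj_termE[OF Xs K g W WY s x] by blast
  have "tnm T W H x' \<in> tr_sums Xs H"
    using norm_stable_subset_tr_sums[OF Xs H] norm_stable_nm[OF Xs H W WH x'] by blast
  then show ?thesis
    unfolding eq nm_mult[OF H W WH s' norm_stable_carrier[OF Xs W x']]
    by (rule green_ideal_mult[OF tr_sums_green_ideal[OF Xs] H nm_closed[OF H W WH s']])
qed

lemma nm_res_cj_mem:
  assumes I: "green_ideal I" and M: "subgroup M G" and K: "subgroup K G" and KM: "K \<subseteq> M"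
    and L: "subgroup L G" and LM: "L \<subseteq> M" and h: "h \<in> M" and w: "w \<in> I K"
    and proper: "\<And>M' K' z. subgroup M' G \<Longrightarrow> M' \<subset> M \<Longrightarrow> subgroup K' G \<Longrightarrow> K' \<subseteq> M' \<Longrightarrow>
      z \<in> I K' \<Longrightarrow> tnm T K' M' z \<in> I M'"
    and top: "tnm T (conjs G h K) M (tcj T h K w) \<in> I M"
  shows "tnm T (L \<inter> conjs G h K) L (tres T (conjs G h K) (L \<inter> conjs G h K) (tcj T h K w)) \<in> I L"
proof -
  have hc: "h \<in> carrier G" using h subgroup.mem_carrier[OF M] by blast
  have Y: "subgroup (conjs G h K) G" by (rule conjs_subgroup[OF hc K])
  have W: "subgroup (L \<inter> conjs G h K) G" by (rule subgroups_Inter_pair[OF L Y])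
  have cw: "tcj T h K w \<in> I (conjs G h K)" by (rule green_ideal_cj[OF I K hc w])
  show ?thesis
  proof (cases "L = M")
    case True
    then have "L \<inter> conjs G h K = conjs G h K" using conjs_subset_subgroup[OF M h KM] by blast
    then show ?thesis
      using top res_id[OF Y green_ideal_carrier[OF I Y, THEN subsetD, OF cw]] True by simp
  next
    case False
    then show ?thesis
      using proper[OF L _ W _ green_ideal_res[OF I Y W _ cw]] LM by blast
  qed
qed

end

locale finite_tambara_functor = tambara_functor +
  assumes finite_carrier: "finite (carrier G)"
begin

lemma nm_tr_term_mem:
  assumes Xs: "norm_stable Xs" and M: "subgroup M G" and K: "subgroup K G" and KM: "K \<subseteq> M"
    and K': "subgroup K' G" and K'K: "K' \<subseteq> K" and u: "u \<in> carrier (tlev T K')" and x: "x \<in> Xs K'"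
  shows "tnm T K M (ttr T K' K (u \<otimes>\<^bsub>tlev T K'\<^esub> x)) \<in> tr_sums Xs M"
proof -
  interpret RK': cring "tlev T K'" by (rule lev_cring[OF K'])
  show ?thesis
    unfolding nm_tr_reciprocity[OF M K K' K'K KM RK'.m_closed[OF u norm_stable_carrier[OF Xs K' x]]]
      nm_tr_rhs_def Let_def lcos_eq_l_coset
    apply (rule ring.finsum_mem_ideal[OF lev_ring[OF M] tr_sums_ideal[OF Xs M]], rule funcsetI)
    subgoal premises orbit for Orb
    proof -
      obtain s where s: "s \<in> sections G M K K'" "Orb = {secact G M K h s | h. h \<in> M}"
        using orbit by blast
      define \<sigma> where "\<sigma> = rep Orb"
      define Hs where "Hs = {h \<in> M. secact G M K h \<sigma> = \<sigma>}"
      have \<sigma>: "coset_map M K K' \<sigma>" unfolding \<sigma>_def by (rule rep_secact_orbit_coset_map[OF M K K' s])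
      have Hs: "subgroup Hs G" unfolding Hs_def by (rule stabilizer_secact_subgroup[OF M K K' \<sigma>])
      have HsM: "Hs \<subseteq> M" unfolding Hs_def by blast
      interpret RHs: cring "tlev T Hs" by (rule lev_cring[OF Hs])
      have factor: "tnm T (Hs \<inter> conjs G (rep D) K) Hs (tres T (conjs G (rep (\<sigma> (rep D <# K))) K')
          (Hs \<inter> conjs G (rep D) K) (tcj T (rep (\<sigma> (rep D <# K))) K' (u \<otimes>\<^bsub>tlev T K'\<^esub> x)))
          \<in> tr_sums Xs Hs" if D: "D \<in> dcosets G Hs M K" for D
      proof -
        have h: "rep D \<in> M" by (rule rep_dcosets_mem[OF Hs M K HsM KM D])
        have W: "subgroup (Hs \<inter> conjs G (rep D) K) G"
          using subgroups_Inter_pair[OF Hs conjs_subgroup[OF _ K]] h subgroup.mem_carrier[OF M] by blast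
        show ?thesis
          using nm_res_cj_term_mem[OF Xs Hs W _ K' stabilizer_secact_conjs(1)[OF M K K' \<sigma> h] _ u x]
            stabilizer_secact_conjs(2)[OF M K K' \<sigma> h] unfolding Hs_def by blast
      qed
      show ?thesis
        unfolding \<sigma>_def[symmetric] Hs_def[symmetric]
        by (intro green_ideal_tr[OF tr_sums_green_ideal[OF Xs] M Hs HsM] funcsetI factor
            RHs.finprod_mem_ideal[OF tr_sums_ideal[OF Xs Hs] finite_dcosets[OF finite_carrier M]
              dcosets_nonempty[OF M]])
    qed
    done
qed

text \<open>
  The reciprocity formula writes \<open>N\<^sub>K\<^sup>M(x + y)\<close> as a sum of transfers from stabilisers \<open>H\<^sub>B \<le> M\<close>
  of products of norms into \<open>H\<^sub>B\<close>. For \<open>H\<^sub>B \<noteq> M\<close> these norms are covered by \<open>proper\<close>; for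
  \<open>H\<^sub>B = M\<close> they are norms of conjugates of \<open>x\<close> or \<open>y\<close>, covered by \<open>top\<close>.
\<close>

lemma nm_add_mem:
  assumes I: "green_ideal I" and M: "subgroup M G" and K: "subgroup K G" and KM: "K \<subseteq> M"
    and x: "x \<in> I K" and y: "y \<in> I K"
    and proper: "\<And>M' K' z. subgroup M' G \<Longrightarrow> M' \<subset> M \<Longrightarrow> subgroup K' G \<Longrightarrow> K' \<subseteq> M' \<Longrightarrow>
      z \<in> I K' \<Longrightarrow> tnm T K' M' z \<in> I M'"
    and top: "\<And>h w. h \<in> M \<Longrightarrow> w \<in> {x, y} \<Longrightarrow> tnm T (conjs G h K) M (tcj T h K w) \<in> I M"
  shows "tnm T K M (x \<oplus>\<^bsub>tlev T K\<^esub> y) \<in> I M"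
  unfolding nm_add_reciprocity[OF M K KM green_ideal_carrier[OF I K, THEN subsetD, OF x]
      green_ideal_carrier[OF I K, THEN subsetD, OF y]] nm_sum_rhs_def Let_def lcos_eq_l_coset
  apply (rule ring.finsum_mem_ideal[OF lev_ring[OF M] green_ideal_ideal[OF I M]], rule funcsetI)
  subgoal premises orbit for Orb
  proof -
    obtain B0 where B0: "B0 \<subseteq> cosetsH G M K" "Orb = {sact G h B0 | h. h \<in> M}" using orbit by blast
    define HB where "HB = {h \<in> M. sact G h (rep Orb) = rep Orb}"
    have HB: "subgroup HB G" unfolding HB_def
      by (rule stabilizer_sact_subgroup[OF M K rep_sact_orbit_subset[OF M K B0]])
    have HBM: "HB \<subseteq> M" unfolding HB_def by blast
    interpret RHB: cring "tlev T HB" by (rule lev_cring[OF HB])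
    have factor: "tnm T (HB \<inter> conjs G (rep D) K) HB (tres T (conjs G (rep D) K) (HB \<inter> conjs G (rep D) K)
        (tcj T (rep D) K (if rep D <# K \<in> rep Orb then y else x))) \<in> I HB"
      if D: "D \<in> dcosets G HB M K" for D
    proof -
      have h: "rep D \<in> M" by (rule rep_dcosets_mem[OF HB M K HBM KM D])
      show ?thesis using nm_res_cj_mem[OF I M K KM HB HBM h _ proper top[OF h]] x y by simp
    qed
    show ?thesis
      unfolding HB_def[symmetric]
      by (intro green_ideal_tr[OF I M HB HBM] funcsetI factor
          RHB.finprod_mem_ideal[OF green_ideal_ideal[OF I HB] finite_dcosets[OF finite_carrier M]
            dcosets_nonempty[OF M]])
  qed
  done

lemma nm_cj_tr_term_mem:
  assumes Xs: "norm_stable Xs" and M: "subgroup M G" and K: "subgroup K G" and KM: "K \<subseteq> M"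
    and K0: "subgroup K0 G" and K0K: "K0 \<subseteq> K" and u: "u \<in> carrier (tlev T K0)" and x: "x \<in> Xs K0"
    and h: "h \<in> M"
  shows "tnm T (conjs G h K) M (tcj T h K (ttr T K0 K (u \<otimes>\<^bsub>tlev T K0\<^esub> x))) \<in> tr_sums Xs M"
proof -
  have hc: "h \<in> carrier G" using h subgroup.mem_carrier[OF M] by blast
  show ?thesis
    unfolding cj_tr_term[OF K K0 K0K hc u norm_stable_carrier[OF Xs K0 x]]
    by (rule nm_tr_term_mem[OF Xs M conjs_subgroup[OF hc K] conjs_subset_subgroup[OF M h KM]
          conjs_subgroup[OF hc K0] conjs_mono[OF K0K] cj_closed[OF hc K0 u] norm_stable_cj[OF Xs K0 hc x]])
qed

lemma tr_sums_nm:
  assumes Xs: "norm_stable Xs"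
  shows "subgroup M G \<Longrightarrow> subgroup K G \<Longrightarrow> K \<subseteq> M \<Longrightarrow> e \<in> tr_sums Xs K \<Longrightarrow>
    tnm T K M e \<in> tr_sums Xs M"
proof (induction "card M" arbitrary: M K e rule: less_induct)
  case less
  note M = less.prems(1)
  have proper: "tnm T K' M' z \<in> tr_sums Xs M'"
    if "subgroup M' G" "M' \<subset> M" "subgroup K' G" "K' \<subseteq> M'" "z \<in> tr_sums Xs K'" for M' K' z
    using less.hyps[OF psubset_card_mono[OF finite_subset[OF subgroup.subset[OF M] finite_carrier] that(2)]
        that(1,3-5)] .
  have "tnm T K M e \<in> tr_sums Xs M" if "subgroup K G" "K \<subseteq> M" "tr_sum Xs n K e" for n K e
    using that
  proof (induction n arbitrary: K e)
    case 0
    from 0(3) have "e = \<zero>\<^bsub>tlev T K\<^esub>" by (cases rule: tr_sum.cases) auto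
    then show ?case using nm_zero[OF M 0(1,2)] green_ideal_zero[OF tr_sums_green_ideal[OF Xs] M] by simp
  next
    case (Suc n)
    note K = Suc.prems(1) and KM = Suc.prems(2)
    obtain K0 u x e' where K0: "subgroup K0 G" "K0 \<subseteq> K" and u: "u \<in> carrier (tlev T K0)"
      and x: "x \<in> Xs K0" and e': "tr_sum Xs n K e'"
      and e: "e = ttr T K0 K (u \<otimes>\<^bsub>tlev T K0\<^esub> x) \<oplus>\<^bsub>tlev T K\<^esub> e'"
      using Suc.prems(3) by (rule tr_sum_SucE)
    have "tnm T (conjs G h K) M (tcj T h K e') \<in> tr_sums Xs M" if h: "h \<in> M" for h
    proof -
      have hc: "h \<in> carrier G" using h subgroup.mem_carrier[OF M] by blast
      show ?thesis
        by (rule Suc.IH[OF conjs_subgroup[OF hc K] conjs_subset_subgroup[OF M h KM] tr_sum_cj[OF Xs hc e']])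
    qed
    moreover have "ttr T K0 K (u \<otimes>\<^bsub>tlev T K0\<^esub> x) \<in> tr_sums Xs K" by (rule tr_term_mem[OF Xs K K0 u x])
    moreover have "e' \<in> tr_sums Xs K" using e' unfolding tr_sums_def by blast
    ultimately show ?case
      unfolding e using nm_cj_tr_term_mem[OF Xs M K KM K0 u x]
      by (intro nm_add_mem[OF tr_sums_green_ideal[OF Xs] M K KM _ _ proper]) auto
  qed
  then show ?case using less.prems unfolding tr_sums_def by blast
qed

lemma tr_sums_tideal: "norm_stable Xs \<Longrightarrow> tideal G T (tr_sums Xs)"
  unfolding tideal_iff_green_ideal using tr_sums_green_ideal tr_sums_nm by blast

lemma tgen_eq_tr_sums:
  assumes Xs: "norm_stable Xs"
  shows "tgen G T Xs = tr_sums Xs"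
proof (rule antisym)
  show "tgen G T Xs \<le> tr_sums Xs"
    by (rule tgen_least[OF tr_sums_tideal[OF Xs] norm_stable_subset_tr_sums[OF Xs]])
  show "tr_sums Xs \<le> tgen G T Xs"
  proof (rule le_funI, rule subsetI)
    fix H e assume "e \<in> tr_sums Xs H"
    then obtain n where e: "tr_sum Xs n H e" unfolding tr_sums_def by blast
    then show "e \<in> tgen G T Xs H"
      unfolding tgen_mem_iff using tr_sum_subgroup tr_sum_mem_tideal[OF Xs] by blast
  qed
qed

lemma tprod_tgen_le:
  assumes Xs: "norm_stable Xs" and Ys: "norm_stable Ys" and J: "tideal G T J"
    and XY: "\<And>H x y. subgroup H G \<Longrightarrow> x \<in> Xs H \<Longrightarrow> y \<in> Ys H \<Longrightarrow> x \<otimes>\<^bsub>tlev T H\<^esub> y \<in> J H"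
  shows "tprod G T (tgen G T Xs) (tgen G T Ys) \<le> J"
  unfolding tprod_def
proof (rule tgen_least[OF J], rule subsetI)
  fix H z assume "z \<in> {u \<otimes>\<^bsub>tlev T H\<^esub> v |u v. u \<in> tgen G T Xs H \<and> v \<in> tgen G T Ys H}"
  then obtain u v where z: "z = u \<otimes>\<^bsub>tlev T H\<^esub> v" and u: "u \<in> tr_sums Xs H" and v: "v \<in> tr_sums Ys H"
    unfolding tgen_eq_tr_sums[OF Xs] tgen_eq_tr_sums[OF Ys] by blast
  obtain n where "tr_sum Xs n H u" using u unfolding tr_sums_def by blast
  then show "z \<in> J H" unfolding z using tr_sum_mult_tr_sums_mem[OF Xs Ys J] XY v by blast
qed

end

section \<open>The map on spectra induced by a morphism\<close>

locale tambara_morphism = T: tambara_functor G T + S: finite_tambara_functor G S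
  for G :: "'g monoid" and T :: "('g, 'a) tambara" and S :: "('g, 'b) tambara" +
  fixes \<phi> :: "'g set \<Rightarrow> 'a \<Rightarrow> 'b"
  assumes morphism: "tmor G T S \<phi>"
begin

lemma phi_hom: "subgroup H G \<Longrightarrow> \<phi> H \<in> ring_hom (tlev T H) (tlev S H)"
  using morphism unfolding tmor_def by (elim conjE) metis

lemma phi_res:
  "subgroup H G \<Longrightarrow> subgroup K G \<Longrightarrow> K \<subseteq> H \<Longrightarrow> x \<in> carrier (tlev T H) \<Longrightarrow>
   \<phi> K (tres T H K x) = tres S H K (\<phi> H x)"
  using morphism unfolding tmor_def by (elim conjE) metis

lemma phi_tr:
  "subgroup H G \<Longrightarrow> subgroup K G \<Longrightarrow> K \<subseteq> H \<Longrightarrow> x \<in> carrier (tlev T K) \<Longrightarrow>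
   \<phi> H (ttr T K H x) = ttr S K H (\<phi> K x)"
  using morphism unfolding tmor_def by (elim conjE) metis

lemma phi_nm:
  "subgroup H G \<Longrightarrow> subgroup K G \<Longrightarrow> K \<subseteq> H \<Longrightarrow> x \<in> carrier (tlev T K) \<Longrightarrow>
   \<phi> H (tnm T K H x) = tnm S K H (\<phi> K x)"
  using morphism unfolding tmor_def by (elim conjE) metis

lemma phi_cj:
  "subgroup H G \<Longrightarrow> g \<in> carrier G \<Longrightarrow> x \<in> carrier (tlev T H) \<Longrightarrow>
   \<phi> (conjs G g H) (tcj T g H x) = tcj S g H (\<phi> H x)"
  using morphism unfolding tmor_def by (elim conjE) metis

lemma phi_closed: "subgroup H G \<Longrightarrow> x \<in> carrier (tlev T H) \<Longrightarrow> \<phi> H x \<in> carrier (tlev S H)"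
  by (rule ring_hom_closed[OF phi_hom])

lemma phi_mult:
  "subgroup H G \<Longrightarrow> x \<in> carrier (tlev T H) \<Longrightarrow> y \<in> carrier (tlev T H) \<Longrightarrow>
   \<phi> H (x \<otimes>\<^bsub>tlev T H\<^esub> y) = \<phi> H x \<otimes>\<^bsub>tlev S H\<^esub> \<phi> H y"
  by (rule ring_hom_mult[OF phi_hom])

lemma phi_one: "subgroup H G \<Longrightarrow> \<phi> H \<one>\<^bsub>tlev T H\<^esub> = \<one>\<^bsub>tlev S H\<^esub>"
  by (rule ring_hom_one[OF phi_hom])

lemma image_norm_stable:
  assumes A: "tideal G T A"
  shows "S.norm_stable (\<lambda>H. \<phi> H ` A H)"
proof -
  note A' = T.tideal_green_ideal[OF A]
  have carrier: "x \<in> carrier (tlev T H)" if "subgroup H G" "x \<in> A H" for H x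
    using T.green_ideal_carrier[OF A' that(1)] that(2) by blast
  have "\<phi> H ` A H \<subseteq> carrier (tlev S H)" if H: "subgroup H G" for H
    using phi_closed[OF H carrier[OF H]] by blast
  moreover have "tres S H K ` \<phi> H ` A H \<subseteq> \<phi> K ` A K"
    if H: "subgroup H G" and K: "subgroup K G" and KH: "K \<subseteq> H" for H K
  proof (rule image_subsetI, elim imageE)
    fix y x assume y: "y = \<phi> H x" and x: "x \<in> A H"
    show "tres S H K y \<in> \<phi> K ` A K"
      unfolding y phi_res[OF H K KH carrier[OF H x], symmetric]
      by (rule imageI[OF T.green_ideal_res[OF A' H K KH x]])
  qed
  moreover have "tnm S K H ` \<phi> K ` A K \<subseteq> \<phi> H ` A H"
    if H: "subgroup H G" and K: "subgroup K G" and KH: "K \<subseteq> H" for H K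
  proof (rule image_subsetI, elim imageE)
    fix y x assume y: "y = \<phi> K x" and x: "x \<in> A K"
    show "tnm S K H y \<in> \<phi> H ` A H"
      unfolding y phi_nm[OF H K KH carrier[OF K x], symmetric]
      by (rule imageI[OF T.tideal_nm[OF A H K KH x]])
  qed
  moreover have "tcj S g H ` \<phi> H ` A H \<subseteq> \<phi> (conjs G g H) ` A (conjs G g H)"
    if H: "subgroup H G" and g: "g \<in> carrier G" for H g
  proof (rule image_subsetI, elim imageE)
    fix y x assume y: "y = \<phi> H x" and x: "x \<in> A H"
    show "tcj S g H y \<in> \<phi> (conjs G g H) ` A (conjs G g H)"
      unfolding y phi_cj[OF H g carrier[OF H x], symmetric]
      by (rule imageI[OF T.green_ideal_cj[OF A' H g x]])
  qed
  ultimately show ?thesis unfolding S.norm_stable_def by simp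
qed

lemma tpush_tideal:
  assumes A: "tideal G T A"
  shows "tideal G S (tpush G S \<phi> A)"
  unfolding tpush_def
proof (rule S.tgen_tideal, rule subsetI)
  fix H y assume "subgroup H G" "y \<in> \<phi> H ` A H"
  then show "y \<in> carrier (tlev S H)" by (rule S.norm_stable_carrier[OF image_norm_stable[OF A]])
qed

lemma tpush_superset: "subgroup H G \<Longrightarrow> x \<in> A H \<Longrightarrow> \<phi> H x \<in> tpush G S \<phi> A H"
  unfolding tpush_def using S.tgen_superset[of H "\<lambda>H. \<phi> H ` A H"] by blast

definition tvimage :: "('g set \<Rightarrow> 'b set) \<Rightarrow> 'g set \<Rightarrow> 'a set" where
  "tvimage Q = (\<lambda>H. if subgroup H G then {x \<in> carrier (tlev T H). \<phi> H x \<in> Q H} else {})"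

lemma tvimage_mem_iff: "x \<in> tvimage Q H \<longleftrightarrow> subgroup H G \<and> x \<in> carrier (tlev T H) \<and> \<phi> H x \<in> Q H"
  unfolding tvimage_def by auto

lemma tvimage_tideal:
  assumes Q: "tideal G S Q"
  shows "tideal G T (tvimage Q)"
  unfolding tideal_def
proof (intro conjI allI impI ballI image_subsetI)
  fix H assume H: "subgroup H G"
  have "ideal {x \<in> carrier (tlev T H). \<phi> H x \<in> Q H} (tlev T H)"
    by (rule ring_hom_ring.ideal_vimage[OF ring_hom_ringI2[OF T.lev_ring[OF H] S.lev_ring[OF H]
          phi_hom[OF H]] S.green_ideal_ideal[OF S.tideal_green_ideal[OF Q] H]])
  then show "ideal (tvimage Q H) (tlev T H)" unfolding tvimage_def using H by simp
next
  note Q' = S.tideal_green_ideal[OF Q]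
  fix H K x assume H: "subgroup H G" and K: "subgroup K G" and KH: "K \<subseteq> H"
  { assume "x \<in> tvimage Q H"
    then show "tres T H K x \<in> tvimage Q K"
      using K T.res_closed[OF H K KH] phi_res[OF H K KH] S.green_ideal_res[OF Q' H K KH]
      by (simp add: tvimage_mem_iff) }
  { assume "x \<in> tvimage Q K"
    then show "ttr T K H x \<in> tvimage Q H"
      using H T.tr_closed[OF H K KH] phi_tr[OF H K KH] S.green_ideal_tr[OF Q' H K KH]
      by (simp add: tvimage_mem_iff) }
  { assume "x \<in> tvimage Q K"
    then show "tnm T K H x \<in> tvimage Q H"
      using H T.nm_closed[OF H K KH] phi_nm[OF H K KH] S.tideal_nm[OF Q H K KH]
      by (simp add: tvimage_mem_iff) }
next
  fix H g x assume H: "subgroup H G" and g: "g \<in> carrier G" and "x \<in> tvimage Q H"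
  then show "tcj T g H x \<in> tvimage Q (conjs G g H)"
    using T.conjs_subgroup[OF g H] T.cj_closed[OF g H] phi_cj[OF H g]
      S.green_ideal_cj[OF S.tideal_green_ideal[OF Q] H g]
    by (simp add: tvimage_mem_iff)
qed (simp add: tvimage_def)

lemma tpush_le_iff:
  assumes Q: "tideal G S Q" and A: "tideal G T A"
  shows "tpush G S \<phi> A \<le> Q \<longleftrightarrow> A \<le> tvimage Q"
proof
  assume push: "tpush G S \<phi> A \<le> Q"
  show "A \<le> tvimage Q"
  proof (rule le_funI, rule subsetI)
    fix H x assume x: "x \<in> A H"
    then have H: "subgroup H G" using T.green_ideal_off[OF T.tideal_green_ideal[OF A]] by blast
    have "x \<in> carrier (tlev T H)" using x T.green_ideal_carrier[OF T.tideal_green_ideal[OF A] H] by blast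
    moreover have "\<phi> H x \<in> Q H" using tpush_superset[where A=A, OF H x] push by (auto simp: le_fun_def)
    ultimately show "x \<in> tvimage Q H" using H by (simp add: tvimage_mem_iff)
  qed
next
  assume le: "A \<le> tvimage Q"
  show "tpush G S \<phi> A \<le> Q"
    unfolding tpush_def
  proof (rule S.tgen_least[OF Q], rule image_subsetI)
    fix H x assume "subgroup H G" "x \<in> A H"
    then have "x \<in> tvimage Q H" using le by (auto simp: le_fun_def)
    then show "\<phi> H x \<in> Q H" by (simp add: tvimage_mem_iff)
  qed
qed

lemma tprod_tpush_le:
  assumes A: "tideal G T A" and B: "tideal G T B"
  shows "tprod G S (tpush G S \<phi> A) (tpush G S \<phi> B) \<le> tpush G S \<phi> (tprod G T A B)"
  unfolding tpush_def
proof (rule S.tprod_tgen_le[OF image_norm_stable[OF A] image_norm_stable[OF B]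
      tpush_tideal[OF T.tprod_tideal[OF A B], unfolded tpush_def]])
  fix H u v assume H: "subgroup H G" and "u \<in> \<phi> H ` A H" "v \<in> \<phi> H ` B H"
  then obtain a b where u: "u = \<phi> H a" "a \<in> A H" and v: "v = \<phi> H b" "b \<in> B H" by blast
  have "\<phi> H (a \<otimes>\<^bsub>tlev T H\<^esub> b) \<in> tpush G S \<phi> (tprod G T A B) H"
    by (rule tpush_superset[where A="tprod G T A B", OF H T.tprod_mem[where I=A and J=B, OF H u(2) v(2)]])
  moreover have "\<phi> H (a \<otimes>\<^bsub>tlev T H\<^esub> b) = u \<otimes>\<^bsub>tlev S H\<^esub> v"
    unfolding u v using phi_mult[OF H] u(2) v(2)
      T.green_ideal_carrier[OF T.tideal_green_ideal[OF A] H]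
      T.green_ideal_carrier[OF T.tideal_green_ideal[OF B] H] by blast
  ultimately show "u \<otimes>\<^bsub>tlev S H\<^esub> v \<in> tgen G S (\<lambda>H. \<phi> H ` tprod G T A B H) H"
    unfolding tpush_def by simp
qed

lemma tunit_le_tpush: "tunit G S \<le> tpush G S \<phi> (tunit G T)"
proof (rule le_funI, rule subsetI)
  fix H y assume "y \<in> tunit G S H"
  then have H: "subgroup H G" and y: "y \<in> carrier (tlev S H)" by (auto simp: tunit_def split: if_splits)
  interpret R: cring "tlev S H" by (rule S.lev_cring[OF H])
  have "\<phi> H \<one>\<^bsub>tlev T H\<^esub> \<in> tpush G S \<phi> (tunit G T) H"
    using tpush_superset[OF H] ring.ring_simprules(6)[OF T.lev_ring[OF H]] H by (simp add: tunit_def)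
  then have "y \<otimes>\<^bsub>tlev S H\<^esub> \<one>\<^bsub>tlev S H\<^esub> \<in> tpush G S \<phi> (tunit G T) H"
    unfolding phi_one[OF H]
    by (rule S.green_ideal_mult[OF S.tideal_green_ideal[OF tpush_tideal[OF T.tunit_tideal]] H y])
  then show "y \<in> tpush G S \<phi> (tunit G T) H" using y by simp
qed

lemma tpow_tpush_le:
  assumes A: "tideal G T A"
  shows "tpow G S (tpush G S \<phi> A) n \<le> tpush G S \<phi> (tpow G T A n)"
proof (induction n)
  case 0
  then show ?case using tunit_le_tpush by simp
next
  case (Suc n)
  have "tpow G S (tpush G S \<phi> A) (Suc n) \<le> tprod G S (tpush G S \<phi> (tpow G T A n)) (tpush G S \<phi> A)"
    using S.tprod_mono[OF Suc.IH order_refl] by simp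
  also have "\<dots> \<le> tpush G S \<phi> (tpow G T A (Suc n))"
    using tprod_tpush_le[OF T.tpow_tideal[OF A] A] by simp
  finally show ?case .
qed

lemma trad_tvimage_le:
  assumes Q: "tprime G S Q"
  shows "trad G T (tvimage Q) \<le> tvimage Q"
proof (rule le_funI, rule subsetI)
  fix H x assume "x \<in> trad G T (tvimage Q) H"
  then obtain n where H: "subgroup H G" and x: "x \<in> carrier (tlev T H)"
    and n: "tpow G T (tgen1 G T H x) n \<le> tvimage Q"
    unfolding trad_def by (auto split: if_splits)
  have Qt: "tideal G S Q" by (rule S.tprime_tideal[OF Q])
  have gen: "tideal G T (tgen1 G T H x)" by (rule T.tgen1_tideal[OF H x])
  have "tgen1 G S H (\<phi> H x) \<le> tpush G S \<phi> (tgen1 G T H x)"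
    by (rule S.tgen1_le[OF tpush_tideal[OF gen] tpush_superset[where A="tgen1 G T H x", OF H T.tgen1_mem[OF H]]])
  then have "tpow G S (tgen1 G S H (\<phi> H x)) n \<le> tpow G S (tpush G S \<phi> (tgen1 G T H x)) n"
    by (rule S.tpow_mono)
  also have "\<dots> \<le> tpush G S \<phi> (tpow G T (tgen1 G T H x) n)" by (rule tpow_tpush_le[OF gen])
  also have "\<dots> \<le> Q" using n tpush_le_iff[OF Qt T.tpow_tideal[OF gen]] by blast
  finally have "tgen1 G S H (\<phi> H x) \<le> Q"
    by (rule S.tpow_le_prime[OF Q S.tgen1_tideal[OF H phi_closed[OF H x]]])
  then show "x \<in> tvimage Q H" using S.tgen1_mem[OF H] H x by (auto simp: le_fun_def tvimage_mem_iff)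
qed

lemma ttilde_le_prime_iff:
  assumes Q: "tprime G S Q" and I: "tideal G T I"
  shows "ttilde G S \<phi> I \<le> Q \<longleftrightarrow> I \<le> tvimage Q"
proof -
  have "ttilde G S \<phi> I \<le> Q \<longleftrightarrow> tpush G S \<phi> I \<le> Q"
  proof
    assume "ttilde G S \<phi> I \<le> Q"
    then show "tpush G S \<phi> I \<le> Q"
      using S.le_trad[OF tpush_tideal[OF I]] unfolding ttilde_def by (rule order_trans[rotated])
  next
    assume "tpush G S \<phi> I \<le> Q"
    then have "trad G S (tpush G S \<phi> I) \<le> trad G S Q" by (rule S.trad_mono)
    also have "\<dots> \<le> Q" by (rule S.trad_prime_le[OF Q])
    finally show "ttilde G S \<phi> I \<le> Q" unfolding ttilde_def .
  qed
  also have "\<dots> \<longleftrightarrow> I \<le> tvimage Q" by (rule tpush_le_iff[OF S.tprime_tideal[OF Q] I])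
  finally show ?thesis .
qed

lemma spec_map_eq_tvimage:
  assumes Q: "tprime G S Q"
  shows "spec_map G T S \<phi> Q = tvimage Q"
proof -
  have P: "tideal G T (tvimage Q)" by (rule tvimage_tideal[OF S.tprime_tideal[OF Q]])
  have "trad G T (tvimage Q) = tvimage Q"
    using trad_tvimage_le[OF Q] T.le_trad[OF P] by (rule antisym)
  then have "tvimage Q \<in> radid G T" using P by (simp add: radid_def)
  moreover have "{I \<in> radid G T. fpoint Q (ttilde G S \<phi> I) = 0} = {I \<in> radid G T. I \<le> tvimage Q}"
    using ttilde_le_prime_iff[OF Q] by (auto simp: fpoint_def radid_def)
  ultimately show ?thesis
    unfolding spec_map_def prime_of_point_def by (intro T.tjoin_eq_greatest) auto
qed

end

theorem proposition6p13:
  fixes G :: "'g monoid" and T :: "('g, 'a) tambara" and S :: "('g, 'b) tambara"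
    and \<phi> :: "'g set \<Rightarrow> 'a \<Rightarrow> 'b" and Q :: "'g set \<Rightarrow> 'b set"
  assumes "group G" and "finite (carrier G)"
    and "tambara G T" and "tambara G S" and "tmor G T S \<phi>"
    and "tprime G S Q"
  shows "spec_map G T S \<phi> Q =
           (\<lambda>H. if subgroup H G then {x \<in> carrier (tlev T H). \<phi> H x \<in> Q H} else {})"
proof -
  interpret tambara_morphism G T S \<phi>
    using assms by (simp add: tambara_morphism_def tambara_functor_def finite_tambara_functor_def
        finite_tambara_functor_axioms_def tambara_functor_axioms_def tambara_morphism_axioms_def)
  show ?thesis using spec_map_eq_tvimage[OF assms(6)] by (simp add: tvimage_def)
qed

end
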